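(* Let $X$ be a complete CAT(0)-space with base point $x_0$, and let $g$ be an isometry of $X$ with $d_g:=\inf_{x\in X}d(x,gx)>0$. Then $g$ fixes a point $\gamma$ of the visual boundary of $X$. The metric functional corresponding to this point is fixed by $g$ and is the Busemann function $h=b_\gamma$ of the geodesic ray $\gamma$ from $x_0$ representing this boundary point. Moreover $h$ is the unique horofunction such that \[ h(gx)=h(x)-d_{g}\quad\text{for all }x\in X, \] and \[ \frac{1}{n}d(g^{n}x_{0},\gamma(d_{g}n))\rightarrow0\quad(n\to\infty). \]
   Context: The visual bordification of $X$ is $X$ together with the set of equivalence classes of geodesic rays (two rays equivalent if at bounded distance); isometries act on it naturally. For a geodesic ray $\gamma$ with $\gamma(0)=x_0$, its Busemann function is $b_\gamma(y)=\lim_{t\to\infty}(d(y,\gamma(t))-t)$. Metric functionals: with $\mathrm{Hom}(X,\mathbb{R})$ the $1$-Lipschitz functions with pointwise convergence topology and $h_y(\cdot)=d(\cdot,y)-d(x_0,y)$, they are the elements of the closure of $\{h_y\}$; an isometry $g$ acts on them by $(gh)(x)=h(g^{-1}x)-h(g^{-1}x_0)$. A horofunction is a limit of functions $h_{y_n}$ with respect to uniform convergence on bounded sets. *)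

theory Defs
  imports "HOL-Analysis.Analysis"
begin

definition geodesic_segment :: "(real \<Rightarrow> 'a::metric_space) \<Rightarrow> 'a \<Rightarrow> 'a \<Rightarrow> bool" where
  "geodesic_segment c x y \<longleftrightarrow>
     c 0 = x \<and> c (dist x y) = y \<and>
     (\<forall>s\<in>{0..dist x y}. \<forall>t\<in>{0..dist x y}. dist (c s) (c t) = \<bar>s - t\<bar>)"

definition geodesic_space :: "'a::metric_space itself \<Rightarrow> bool" where
  "geodesic_space _ \<longleftrightarrow> (\<forall>x y::'a. \<exists>c. geodesic_segment c x y)"

text \<open>Squared distance, in the Euclidean comparison triangle for a triangle with side
  lengths a = d(x,y), b = d(x,z), e = d(y,z), between the comparison points of the point at
  distance s from x on [x,y] and the point at distance t from x on [x,z] (law of cosines).\<close>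
definition comparison_dist_sq :: "real \<Rightarrow> real \<Rightarrow> real \<Rightarrow> real \<Rightarrow> real \<Rightarrow> real" where
  "comparison_dist_sq a b e s t = s\<^sup>2 + t\<^sup>2 - s * t * (a\<^sup>2 + b\<^sup>2 - e\<^sup>2) / (a * b)"

text \<open>CAT(0): geodesic, and every geodesic triangle is no fatter than its Euclidean comparison
  triangle (any two points of a triangle lie on two sides sharing a vertex, or on one side).\<close>
definition CAT0 :: "'a::metric_space itself \<Rightarrow> bool" where
  "CAT0 T \<longleftrightarrow> geodesic_space T \<and>
     (\<forall>(x::'a) y z c1 c2 s t. geodesic_segment c1 x y \<longrightarrow> geodesic_segment c2 x z \<longrightarrow>
        s \<in> {0..dist x y} \<longrightarrow> t \<in> {0..dist x z} \<longrightarrow>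
        (dist (c1 s) (c2 t))\<^sup>2 \<le> comparison_dist_sq (dist x y) (dist x z) (dist y z) s t)"

definition geodesic_ray :: "(real \<Rightarrow> 'a::metric_space) \<Rightarrow> bool" where
  "geodesic_ray \<gamma> \<longleftrightarrow> (\<forall>s\<ge>0. \<forall>t\<ge>0. dist (\<gamma> s) (\<gamma> t) = \<bar>s - t\<bar>)"

definition asymptotic :: "(real \<Rightarrow> 'a::metric_space) \<Rightarrow> (real \<Rightarrow> 'a) \<Rightarrow> bool" where
  "asymptotic \<gamma> \<delta> \<longleftrightarrow> (\<exists>C. \<forall>t\<ge>0. dist (\<gamma> t) (\<delta> t) \<le> C)"

definition visual_boundary :: "'a::metric_space itself \<Rightarrow> (real \<Rightarrow> 'a) set set" where
  "visual_boundary _ = {{\<delta>. geodesic_ray \<delta> \<and> asymptotic \<delta> \<gamma>} | \<gamma>. geodesic_ray \<gamma>}"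

definition isometry :: "('a::metric_space \<Rightarrow> 'a) \<Rightarrow> bool" where
  "isometry g \<longleftrightarrow> bij g \<and> (\<forall>x y. dist (g x) (g y) = dist x y)"

definition boundary_action :: "('a::metric_space \<Rightarrow> 'a) \<Rightarrow> (real \<Rightarrow> 'a) set \<Rightarrow> (real \<Rightarrow> 'a) set" where
  "boundary_action g \<xi> = (\<lambda>\<gamma>. g \<circ> \<gamma>) ` \<xi>"

definition busemann :: "(real \<Rightarrow> 'a::metric_space) \<Rightarrow> 'a \<Rightarrow> real" where
  "busemann \<gamma> y = Lim at_top (\<lambda>t. dist y (\<gamma> t) - t)"

definition translation_length :: "('a::metric_space \<Rightarrow> 'a) \<Rightarrow> real" where
  "translation_length g = (INF x. dist x (g x))"

definition hfun :: "'a::metric_space \<Rightarrow> 'a \<Rightarrow> 'a \<Rightarrow> real" where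
  "hfun x0 y = (\<lambda>x. dist x y - dist x0 y)"

text \<open>Metric functionals: closure of the h_y in Hom(X,R) (1-Lipschitz functions, topology of
  pointwise convergence = product topology on the function type).\<close>
definition metric_functional :: "'a::metric_space \<Rightarrow> ('a \<Rightarrow> real) \<Rightarrow> bool" where
  "metric_functional x0 h \<longleftrightarrow>
     (\<forall>x y. \<bar>h x - h y\<bar> \<le> dist x y) \<and> h \<in> closure (range (hfun x0))"

definition functional_action :: "'a::metric_space \<Rightarrow> ('a \<Rightarrow> 'a) \<Rightarrow> ('a \<Rightarrow> real) \<Rightarrow> ('a \<Rightarrow> real)" where
  "functional_action x0 g h = (\<lambda>x. h (inv g x) - h (inv g x0))"

definition horofunction :: "'a::metric_space \<Rightarrow> ('a \<Rightarrow> real) \<Rightarrow> bool" where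
  "horofunction x0 h \<longleftrightarrow>
     (\<exists>y :: nat \<Rightarrow> 'a. \<forall>B. bounded B \<longrightarrow> uniform_limit B (\<lambda>n. hfun x0 (y n)) h sequentially)"

end

theory Submission
  imports Defs
begin

text \<open>
  The CAT(0) midpoint argument shows d(x0, g^n x0) \<ge> n d_g, and comparing with a point moved by
  less than d_g + e gives d(x0, g^n x0) \<le> (d_g + e) n for large n. Hence there are arbitrarily
  large e-good times n, at which the orbit has moved away from x0 at rate at least d_g - e over
  every final stretch [j, n]. Comparison triangles show that the geodesics from x0 to g^n x0, n
  running through good times for e \<rightarrow> 0, converge to a ray \<gamma> which the orbit follows
  sublinearly: d(g^n x0, \<gamma>(d_g n)) = o(n).

  The displacement t \<mapsto> d(g \<gamma>(t), \<gamma>(t)) is convex and sublinear, hence bounded by its value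
  at 0, so g fixes the class of \<gamma>. As g moves \<gamma> a bounded amount, b_\<gamma>(gx) - b_\<gamma>(x) is constant,
  and the tracking estimate identifies the constant as -d_g. Conversely, a horofunction h with
  h(gx) = h(x) - d_g is unbounded below along the orbit, so in a complete CAT(0) space it is the
  Busemann function of a ray \<delta> from x0; along \<gamma> the function r \<mapsto> b_\<delta>(\<gamma>(r)) + r is convex,
  nonnegative, zero at 0 and sublinear, hence zero, which forces \<delta> = \<gamma>.
\<close>

lemma geodesic_segment_start: "geodesic_segment c x y \<Longrightarrow> c 0 = x"
  unfolding geodesic_segment_def by auto

lemma geodesic_segment_end: "geodesic_segment c x y \<Longrightarrow> c (dist x y) = y"
  unfolding geodesic_segment_def by auto

lemma geodesic_segment_dist:
  "geodesic_segment c x y \<Longrightarrow> 0 \<le> s \<Longrightarrow> s \<le> dist x y \<Longrightarrow> 0 \<le> t \<Longrightarrow> t \<le> dist x y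
    \<Longrightarrow> dist (c s) (c t) = \<bar>s - t\<bar>"
  unfolding geodesic_segment_def by auto

lemma geodesic_segment_dist_start:
  "geodesic_segment c x y \<Longrightarrow> 0 \<le> s \<Longrightarrow> s \<le> dist x y \<Longrightarrow> dist x (c s) = s"
  using geodesic_segment_dist[of c x y 0 s] geodesic_segment_start[of c x y] by auto

lemma geodesic_segment_dist_end:
  "geodesic_segment c x y \<Longrightarrow> 0 \<le> s \<Longrightarrow> s \<le> dist x y \<Longrightarrow> dist (c s) y = dist x y - s"
  using geodesic_segment_dist[of c x y s "dist x y"] geodesic_segment_end[of c x y] by auto

lemma geodesic_segment_reverse:
  "geodesic_segment c x y \<Longrightarrow> geodesic_segment (\<lambda>s. c (dist x y - s)) y x"
  unfolding geodesic_segment_def by (auto simp: dist_commute)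

lemma geodesic_segment_comp_isometric:
  "geodesic_segment c x y \<Longrightarrow> (\<And>a b. dist (h a) (h b) = dist a b)
    \<Longrightarrow> geodesic_segment (h \<circ> c) (h x) (h y)"
  unfolding geodesic_segment_def by auto

lemma geodesic_segment_const: "geodesic_segment (\<lambda>_. p) p p"
  unfolding geodesic_segment_def by auto

lemma geodesic_ray_dist:
  "geodesic_ray \<gamma> \<Longrightarrow> 0 \<le> s \<Longrightarrow> 0 \<le> t \<Longrightarrow> dist (\<gamma> s) (\<gamma> t) = \<bar>s - t\<bar>"
  unfolding geodesic_ray_def by auto

lemma geodesic_ray_dist_start: "geodesic_ray \<gamma> \<Longrightarrow> 0 \<le> t \<Longrightarrow> dist (\<gamma> 0) (\<gamma> t) = t"
  by (simp add: geodesic_ray_dist)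

lemma geodesic_ray_segment: "geodesic_ray \<gamma> \<Longrightarrow> 0 \<le> t \<Longrightarrow> geodesic_segment \<gamma> (\<gamma> 0) (\<gamma> t)"
  unfolding geodesic_segment_def by (auto simp: geodesic_ray_dist)

lemma geodesic_ray_comp_isometric:
  "geodesic_ray \<gamma> \<Longrightarrow> (\<And>a b. dist (h a) (h b) = dist a b) \<Longrightarrow> geodesic_ray (h \<circ> \<gamma>)"
  unfolding geodesic_ray_def by auto

lemma asymptotic_refl: "asymptotic \<gamma> \<gamma>"
  unfolding asymptotic_def by (intro exI[of _ 0]) simp

lemma asymptotic_sym: "asymptotic \<gamma> \<delta> \<Longrightarrow> asymptotic \<delta> \<gamma>"
  unfolding asymptotic_def by (simp add: dist_commute)

lemma asymptotic_trans:
  assumes "asymptotic \<alpha> \<beta>" "asymptotic \<beta> \<gamma>"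
  shows "asymptotic \<alpha> \<gamma>"
proof -
  obtain C1 C2 where "\<forall>t\<ge>0. dist (\<alpha> t) (\<beta> t) \<le> C1" "\<forall>t\<ge>0. dist (\<beta> t) (\<gamma> t) \<le> C2"
    using assms unfolding asymptotic_def by blast
  then have "\<forall>t\<ge>0. dist (\<alpha> t) (\<gamma> t) \<le> C1 + C2"
    by (smt (verit) dist_triangle)
  then show ?thesis unfolding asymptotic_def by blast
qed

lemma asymptotic_comp_isometric:
  "asymptotic \<gamma> \<delta> \<Longrightarrow> (\<And>a b. dist (h a) (h b) = dist a b) \<Longrightarrow> asymptotic (h \<circ> \<gamma>) (h \<circ> \<delta>)"
  unfolding asymptotic_def by simp

section \<open>Comparison estimates in CAT(0) spaces\<close>

lemma CAT0_geodesic_segment_exists: "CAT0 TYPE('a::metric_space) \<Longrightarrow> \<exists>c. geodesic_segment c (x::'a) y"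
  unfolding CAT0_def geodesic_space_def by blast

lemma CAT0_comparison:
  assumes "CAT0 TYPE('a::metric_space)" "geodesic_segment c1 (x::'a) y" "geodesic_segment c2 x z"
    "0 \<le> s" "s \<le> dist x y" "0 \<le> t" "t \<le> dist x z"
  shows "(dist (c1 s) (c2 t))\<^sup>2 \<le> comparison_dist_sq (dist x y) (dist x z) (dist y z) s t"
  using assms unfolding CAT0_def by auto

lemma comparison_dist_sq_scaled:
  assumes "0 \<le> a" "0 \<le> b" "a = 0 \<Longrightarrow> e = b" "b = 0 \<Longrightarrow> e = a"
  shows "comparison_dist_sq a b e (u * a) (u * b) = (u * e)\<^sup>2"
  using assms unfolding comparison_dist_sq_def
  by (cases "a = 0 \<or> b = 0") (auto simp: field_simps power2_eq_square)

lemma comparison_dist_sq_diagonal: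
  "0 < a \<Longrightarrow> 0 < b \<Longrightarrow> comparison_dist_sq a b e s s = s\<^sup>2 * (e\<^sup>2 - (a - b)\<^sup>2) / (a * b)"
  unfolding comparison_dist_sq_def by (simp add: field_simps power2_eq_square)

lemma CAT0_dist_scaled_geodesics:
  assumes "CAT0 TYPE('a::metric_space)" "geodesic_segment c1 (x::'a) y" "geodesic_segment c2 x z"
    "0 \<le> u" "u \<le> 1"
  shows "dist (c1 (u * dist x y)) (c2 (u * dist x z)) \<le> u * dist y z"
proof -
  have times: "0 \<le> u * dist x y" "u * dist x y \<le> dist x y" "0 \<le> u * dist x z" "u * dist x z \<le> dist x z"
    using assms by (auto simp: mult_left_le_one_le)
  have "(dist (c1 (u * dist x y)) (c2 (u * dist x z)))\<^sup>2 \<le> (u * dist y z)\<^sup>2"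
    using CAT0_comparison[OF assms(1-3) times]
      comparison_dist_sq_scaled[of "dist x y" "dist x z" "dist y z" u]
    by (simp add: mult.commute dist_commute)
  then show ?thesis using assms(4) by (meson power2_le_imp_le zero_le_dist mult_nonneg_nonneg)
qed

text \<open>Compare both geodesics with the diagonal geodesic from x to y'.\<close>
lemma CAT0_dist_geodesics_convex:
  assumes cat: "CAT0 TYPE('a::metric_space)"
    and c: "geodesic_segment c (x::'a) y" and c': "geodesic_segment c' x' y'"
    and u: "0 \<le> u" "u \<le> 1"
  shows "dist (c (u * dist x y)) (c' (u * dist x' y')) \<le> (1 - u) * dist x x' + u * dist y y'"
proof -
  obtain m where m: "geodesic_segment m x y'" using CAT0_geodesic_segment_exists[OF cat] by blast
  have "dist (c (u * dist x y)) (m (u * dist x y')) \<le> u * dist y y'"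
    using CAT0_dist_scaled_geodesics[OF cat c m u] .
  moreover have "dist (m (dist x y' - (1 - u) * dist y' x)) (c' (dist x' y' - (1 - u) * dist y' x'))
      \<le> (1 - u) * dist x x'"
    using CAT0_dist_scaled_geodesics[OF cat geodesic_segment_reverse[OF m]
        geodesic_segment_reverse[OF c'], of "1 - u"] u
    by (simp add: dist_commute)
  moreover have "dist x y' - (1 - u) * dist y' x = u * dist x y'"
    "dist x' y' - (1 - u) * dist y' x' = u * dist x' y'"
    by (simp_all add: dist_commute algebra_simps)
  ultimately show ?thesis
    using dist_triangle[of "c (u * dist x y)" "c' (u * dist x' y')" "m (u * dist x y')"] by simp
qed

lemma CAT0_dist_geodesics_same_time:
  assumes "CAT0 TYPE('a::metric_space)" "geodesic_segment c1 (x::'a) y" "geodesic_segment c2 x z"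
    "0 < dist x y" "0 < dist x z" "0 \<le> s" "s \<le> dist x y" "s \<le> dist x z"
  shows "(dist (c1 s) (c2 s))\<^sup>2
    \<le> s\<^sup>2 * ((dist y z)\<^sup>2 - (dist x y - dist x z)\<^sup>2) / (dist x y * dist x z)"
  using CAT0_comparison[OF assms(1-3,6,7,6,8)] comparison_dist_sq_diagonal[OF assms(4,5)] by simp

lemma CAT0_near_geodesic:
  assumes cat: "CAT0 TYPE('a::metric_space)" and c: "geodesic_segment c (x::'a) z"
    and s: "0 \<le> s" "s \<le> dist x z" and p: "dist x p = s"
    and pz: "dist p z \<le> dist x z - s + e" and e: "0 \<le> e"
  shows "(dist p (c s))\<^sup>2 \<le> s * e\<^sup>2 / dist x z + 2 * e * s"
proof (cases "s = 0")
  case True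
  then show ?thesis using p geodesic_segment_start[OF c] by simp
next
  case False
  then have s0: "0 < s" "0 < dist x z" using s by auto
  obtain c1 where c1: "geodesic_segment c1 x p" using CAT0_geodesic_segment_exists[OF cat] by blast
  have "(dist p z)\<^sup>2 \<le> (dist x z - s + e)\<^sup>2"
    using pz by (intro power_mono) auto
  then have "s * ((dist p z)\<^sup>2 - (s - dist x z)\<^sup>2) \<le> s * (e\<^sup>2 + 2 * e * (dist x z - s))"
    using s0 by (intro mult_left_mono) (auto simp: power2_eq_square algebra_simps)
  also have "\<dots> \<le> s * (e\<^sup>2 + 2 * e * dist x z)"
    using s0 e by (intro mult_left_mono add_left_mono) (auto intro: mult_left_mono)
  finally have "s\<^sup>2 * ((dist p z)\<^sup>2 - (s - dist x z)\<^sup>2) / (s * dist x z)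
      \<le> s * (e\<^sup>2 + 2 * e * dist x z) / dist x z"
    using s0 by (simp add: power2_eq_square divide_right_mono)
  also have "\<dots> = s * e\<^sup>2 / dist x z + 2 * e * s"
    using s0 by (simp add: field_simps)
  finally show ?thesis
    using CAT0_dist_geodesics_same_time[OF cat c1 c, of s] s0 s p geodesic_segment_end[OF c1]
    by simp
qed

lemma sqrt_sum_sq_le:
  fixes X w R :: real
  assumes "0 < w" "X\<^sup>2 \<le> w\<^sup>2 + R\<^sup>2"
  shows "X \<le> w + R\<^sup>2 / (2 * w)"
proof -
  have "(w + R\<^sup>2 / (2 * w))\<^sup>2 = w\<^sup>2 + R\<^sup>2 + (R\<^sup>2 / (2 * w))\<^sup>2"
    using assms(1) by (simp add: power2_eq_square field_simps)
  then have "w\<^sup>2 + R\<^sup>2 \<le> (w + R\<^sup>2 / (2 * w))\<^sup>2"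
    by simp
  then show ?thesis
    using assms by (smt (verit) power2_le_imp_le zero_le_power2 divide_nonneg_pos)
qed

lemma CAT0_dist_geodesic_excess:
  assumes cat: "CAT0 TYPE('a::metric_space)" and c: "geodesic_segment c (x::'a) z"
    and R: "dist y x \<le> R" "R < t" "t \<le> dist x z"
  shows "dist y (c t) - t \<le> dist y z - dist x z + R\<^sup>2 / (2 * (t - R))"
proof -
  obtain c1 where c1: "geodesic_segment c1 x y" using CAT0_geodesic_segment_exists[OF cat] by blast
  define A D u where "A = dist y x" and "D = dist x z" and "u = dist y z - dist x z"
  have A: "0 \<le> A" "A \<le> R" and D: "0 < D" "t \<le> D"
    using R zero_le_dist[of y x] unfolding A_def D_def by linarith+
  have u: "\<bar>u\<bar> \<le> A"
    using dist_triangle[of y z x] dist_triangle[of x z y]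
    unfolding u_def A_def by (simp add: abs_le_iff dist_commute)
  have "(dist y (c t))\<^sup>2 \<le> comparison_dist_sq A D (D + u) A t"
    using CAT0_comparison[OF cat c1 c, of A t] geodesic_segment_end[OF c1] R A D
    unfolding A_def D_def u_def by (simp add: dist_commute)
  also have "\<dots> = A\<^sup>2 + t\<^sup>2 - t * A\<^sup>2 / D + 2 * t * u + t * u\<^sup>2 / D"
    using D u by (cases "A = 0") (auto simp: comparison_dist_sq_def field_simps power2_eq_square)
  also have "\<dots> \<le> (t + u)\<^sup>2 + R\<^sup>2"
  proof -
    have "u\<^sup>2 \<le> A\<^sup>2"
      using u A by (metis abs_le_square_iff abs_of_nonneg)
    then have "t * u\<^sup>2 / D \<le> t * A\<^sup>2 / D"
      using D R A by (intro divide_right_mono mult_left_mono) auto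
    moreover have "A\<^sup>2 \<le> R\<^sup>2" using A by (simp add: power_mono)
    moreover have "(t + u)\<^sup>2 = t\<^sup>2 + 2 * t * u + u\<^sup>2" by (simp add: power2_eq_square algebra_simps)
    ultimately show ?thesis using zero_le_power2[of u] by linarith
  qed
  finally have "dist y (c t) \<le> (t + u) + R\<^sup>2 / (2 * (t + u))"
    using u A R by (intro sqrt_sum_sq_le) auto
  also have "R\<^sup>2 / (2 * (t + u)) \<le> R\<^sup>2 / (2 * (t - R))"
    using u A R by (intro divide_left_mono) auto
  finally show ?thesis unfolding u_def by simp
qed

section \<open>Translation length\<close>

lemma funpow_dist_isometric:
  fixes g :: "'a::metric_space \<Rightarrow> 'a"
  assumes "\<And>a b. dist (g a) (g b) = dist a b"
  shows "dist ((g ^^ n) a) ((g ^^ n) b) = dist a b"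
proof (induction n)
  case (Suc n)
  then show ?case using assms by simp
qed simp

lemma funpow_dist_add_le:
  assumes "\<And>a b. dist (g a) (g b) = dist a b"
  shows "dist x ((g ^^ (m + n)) x) \<le> dist x ((g ^^ m) x) + dist x ((g ^^ n) x)"
  using dist_triangle[of x "(g ^^ (m + n)) x" "(g ^^ m) x"]
    funpow_dist_isometric[OF assms, of m x "(g ^^ n) x"]
  by (simp add: funpow_add)

lemma funpow_dist_mult_le:
  assumes "\<And>a b. dist (g a) (g b) = dist a b"
  shows "dist x ((g ^^ (q * n)) x) \<le> real q * dist x ((g ^^ n) x)"
proof (induction q)
  case (Suc q)
  then show ?case
    using funpow_dist_add_le[OF assms, of x n "q * n"] by (simp add: algebra_simps)
qed simp

lemma funpow_shift:
  assumes "\<And>x. h (g x) = h x - c"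
  shows "h ((g ^^ k) x) = h x - real k * c"
  by (induction k) (simp_all add: assms algebra_simps)

lemma translation_length_le: "translation_length g \<le> dist x (g x)"
  unfolding translation_length_def by (rule cInf_lower) (auto intro: bdd_belowI[of _ 0])

lemma translation_length_less:
  assumes "e > 0"
  shows "\<exists>y. dist y (g y) < translation_length g + e"
proof -
  have "Inf (range (\<lambda>x. dist x (g x))) < translation_length g + e"
    using assms unfolding translation_length_def by simp
  then show ?thesis by (subst (asm) cInf_less_iff) (auto intro: bdd_belowI[of _ 0])
qed

text \<open>The midpoint of a geodesic from x to h x is moved by h at most half as far as h \<circ> h moves x.\<close>
lemma CAT0_translation_length_funpow_2:
  assumes cat: "CAT0 TYPE('a::metric_space)" and h: "\<And>a b. dist (h a) (h b) = dist a b"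
  shows "2 * translation_length h \<le> dist (x::'a) (h (h x))"
proof -
  obtain c where c: "geodesic_segment c x (h x)" using CAT0_geodesic_segment_exists[OF cat] by blast
  define L where "L = dist x (h x)"
  have "dist (c (L - (1/2) * dist (h x) x)) ((h \<circ> c) ((1/2) * dist (h x) (h (h x))))
      \<le> (1/2) * dist x (h (h x))"
    using CAT0_dist_scaled_geodesics[OF cat geodesic_segment_reverse[OF c]
        geodesic_segment_comp_isometric[OF c h], of "1/2"]
    unfolding L_def by simp
  moreover have "dist (h x) x = L" "dist (h x) (h (h x)) = L"
    using h unfolding L_def by (auto simp: dist_commute)
  ultimately have "2 * dist (c (L / 2)) (h (c (L / 2))) \<le> dist x (h (h x))"
    by simp
  then show ?thesis using translation_length_le[of h "c (L / 2)"] by linarith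
qed

lemma CAT0_translation_length_funpow_power_2:
  assumes "CAT0 TYPE('a::metric_space)" "\<And>a b. dist (g a) (g b) = dist a b"
  shows "2 ^ k * translation_length g \<le> dist (x::'a) ((g ^^ (2 ^ k)) x)"
proof (induction k arbitrary: x)
  case 0
  then show ?case using translation_length_le[of g x] by simp
next
  case (Suc k)
  let ?h = "g ^^ (2 ^ k)"
  have "2 * translation_length ?h \<le> dist x (?h (?h x))"
    using CAT0_translation_length_funpow_2[OF assms(1) funpow_dist_isometric[OF assms(2)]] .
  moreover have "2 ^ k * translation_length g \<le> translation_length ?h"
    unfolding translation_length_def[of ?h] using Suc by (intro cINF_greatest) auto
  moreover have "?h (?h x) = (g ^^ (2 ^ Suc k)) x"
    by (simp add: funpow_add mult_2)
  ultimately show ?case by simp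
qed

text \<open>Write 2^k = q n + r with r < n: subadditivity bounds the displacement by 2^k of the
  displacement by n, up to an error independent of k.\<close>
lemma CAT0_funpow_translation_length:
  assumes cat: "CAT0 TYPE('a::metric_space)" and iso: "\<And>a b. dist (g a) (g b) = dist a b"
  shows "real n * translation_length g \<le> dist (x::'a) ((g ^^ n) x)"
proof (cases "n = 0")
  case False
  define D D1 where "D = dist x ((g ^^ n) x)" and "D1 = dist x (g x)"
  have bound: "translation_length g \<le> D / n + n * D1 / 2 ^ k" for k
  proof -
    define q r where "q = 2 ^ k div n" and "r = 2 ^ k mod n"
    have qr: "(2::nat) ^ k = q * n + r" "r < n"
      unfolding q_def r_def using False by simp_all
    then have "real (q * n) \<le> real (2 ^ k)"
      by (intro of_nat_mono) linarith
    then have q: "real q * n \<le> 2 ^ k" by simp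
    have "2 ^ k * translation_length g \<le> dist x ((g ^^ (q * n + r)) x)"
      using CAT0_translation_length_funpow_power_2[OF cat iso, of k x] by (simp flip: qr(1))
    also have "\<dots> \<le> q * D + r * D1"
      using funpow_dist_add_le[OF iso, of x "q * n" r] funpow_dist_mult_le[OF iso, of x q n]
        funpow_dist_mult_le[OF iso, of x r 1]
      unfolding D_def D1_def by simp
    also have "\<dots> \<le> 2 ^ k / n * D + n * D1"
      using qr q False unfolding D_def D1_def
      by (intro add_mono mult_right_mono) (simp_all add: field_simps)
    finally show ?thesis by (simp add: field_simps)
  qed
  have "(\<lambda>k. D / n + n * D1 / 2 ^ k) \<longlonglongrightarrow> D / n + 0"
    by (intro tendsto_add tendsto_const LIMSEQ_divide_realpow_zero) simp
  then have "translation_length g \<le> D / n"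
    using bound by (intro tendsto_lowerbound) auto
  then show ?thesis using False unfolding D_def by (simp add: field_simps)
qed simp

section \<open>Busemann functions\<close>

definition busemann_approx :: "(real \<Rightarrow> 'a::metric_space) \<Rightarrow> 'a \<Rightarrow> real \<Rightarrow> real" where
  "busemann_approx \<gamma> y t = dist y (\<gamma> t) - t"

lemma busemann_approx_antimono:
  assumes "geodesic_ray \<gamma>" "0 \<le> t" "t \<le> t'"
  shows "busemann_approx \<gamma> y t' \<le> busemann_approx \<gamma> y t"
  using dist_triangle[of y "\<gamma> t'" "\<gamma> t"] geodesic_ray_dist[OF assms(1), of t t'] assms
  unfolding busemann_approx_def by simp

lemma busemann_approx_bdd_below:
  assumes "geodesic_ray \<gamma>"
  shows "bdd_below (busemann_approx \<gamma> y ` {0..})"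
proof (rule bdd_belowI)
  fix v assume "v \<in> busemann_approx \<gamma> y ` {0..}"
  then obtain t where "0 \<le> t" "v = dist y (\<gamma> t) - t"
    unfolding busemann_approx_def by auto
  then show "- dist y (\<gamma> 0) \<le> v"
    using dist_triangle[of "\<gamma> 0" "\<gamma> t" y] geodesic_ray_dist_start[OF assms]
    by (simp add: dist_commute)
qed

lemma tendsto_Inf_busemann_approx:
  assumes ray: "geodesic_ray \<gamma>"
  shows "(busemann_approx \<gamma> y \<longlongrightarrow> Inf (busemann_approx \<gamma> y ` {0..})) at_top"
proof (rule tendstoI)
  fix e :: real assume "e > 0"
  define L where "L = Inf (busemann_approx \<gamma> y ` {0..})"
  have "L < L + e" using \<open>e > 0\<close> by simp
  then obtain t0 where t0: "0 \<le> t0" "busemann_approx \<gamma> y t0 < L + e"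
    unfolding L_def by (subst (asm) cInf_less_iff) (auto intro: busemann_approx_bdd_below[OF ray])
  have "busemann_approx \<gamma> y t \<le> busemann_approx \<gamma> y t0" "L \<le> busemann_approx \<gamma> y t" if "t0 \<le> t" for t
    using busemann_approx_antimono[OF ray t0(1) that] that t0 busemann_approx_bdd_below[OF ray]
    unfolding L_def by (auto intro!: cInf_lower)
  then have "\<forall>t\<ge>t0. dist (busemann_approx \<gamma> y t) L < e"
    using t0 by (force simp: dist_real_def)
  then show "\<forall>\<^sub>F t in at_top. dist (busemann_approx \<gamma> y t) L < e"
    unfolding L_def eventually_at_top_linorder by blast
qed

lemma busemann_eq_Inf:
  assumes "geodesic_ray \<gamma>"
  shows "busemann \<gamma> y = Inf (busemann_approx \<gamma> y ` {0..})"
  using tendsto_Lim[OF trivial_limit_at_top_linorder tendsto_Inf_busemann_approx[OF assms]]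
  unfolding busemann_def busemann_approx_def by simp

lemma tendsto_busemann:
  assumes "geodesic_ray \<gamma>"
  shows "(busemann_approx \<gamma> y \<longlongrightarrow> busemann \<gamma> y) at_top"
  using tendsto_Inf_busemann_approx[OF assms] busemann_eq_Inf[OF assms] by simp

lemma LIMSEQ_busemann:
  assumes "geodesic_ray \<gamma>"
  shows "(\<lambda>n. busemann_approx \<gamma> y (real n)) \<longlonglongrightarrow> busemann \<gamma> y"
  using filterlim_compose[OF tendsto_busemann[OF assms] filterlim_real_sequentially]
  by (simp add: o_def)

lemma busemann_le_approx:
  assumes "geodesic_ray \<gamma>" "0 \<le> t"
  shows "busemann \<gamma> y \<le> busemann_approx \<gamma> y t"
  using assms by (auto simp: busemann_eq_Inf intro!: cInf_lower busemann_approx_bdd_below)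

lemma CAT0_busemann_approx_le:
  assumes cat: "CAT0 TYPE('a::metric_space)" and ray: "geodesic_ray \<gamma>"
    and R: "dist (y::'a) (\<gamma> 0) \<le> R" "R < t"
  shows "busemann_approx \<gamma> y t - busemann \<gamma> y \<le> R\<^sup>2 / (2 * (t - R))"
proof -
  have "busemann_approx \<gamma> y t - R\<^sup>2 / (2 * (t - R)) \<le> busemann_approx \<gamma> y s" if s: "0 \<le> s" for s
  proof (cases "s \<le> t")
    case True
    then show ?thesis
      using busemann_approx_antimono[OF ray s True] R by (smt (verit) divide_nonneg_pos zero_le_power2)
  next
    case False
    then show ?thesis
      using CAT0_dist_geodesic_excess[OF cat geodesic_ray_segment[OF ray s] R]
        geodesic_ray_dist_start[OF ray s]
      unfolding busemann_approx_def by simp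
  qed
  then have "busemann_approx \<gamma> y t - R\<^sup>2 / (2 * (t - R)) \<le> busemann \<gamma> y"
    unfolding busemann_eq_Inf[OF ray] by (intro cInf_greatest) auto
  then show ?thesis by simp
qed

lemma busemann_lipschitz:
  assumes ray: "geodesic_ray \<gamma>"
  shows "\<bar>busemann \<gamma> y - busemann \<gamma> z\<bar> \<le> dist y z"
proof (rule tendsto_upperbound)
  show "((\<lambda>t. \<bar>busemann_approx \<gamma> y t - busemann_approx \<gamma> z t\<bar>)
      \<longlongrightarrow> \<bar>busemann \<gamma> y - busemann \<gamma> z\<bar>) at_top"
    by (intro tendsto_rabs tendsto_diff tendsto_busemann[OF ray])
  show "\<forall>\<^sub>F t in at_top. \<bar>busemann_approx \<gamma> y t - busemann_approx \<gamma> z t\<bar> \<le> dist y z"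
    unfolding busemann_approx_def by (smt (verit) always_eventually dist_commute dist_triangle)
qed simp

lemma busemann_on_ray:
  assumes ray: "geodesic_ray \<gamma>" and s: "0 \<le> s"
  shows "busemann \<gamma> (\<gamma> s) = - s"
proof -
  have "\<forall>t\<ge>s. busemann_approx \<gamma> (\<gamma> s) t = - s"
    using geodesic_ray_dist[OF ray] s unfolding busemann_approx_def by auto
  then have "(busemann_approx \<gamma> (\<gamma> s) \<longlongrightarrow> - s) at_top"
    by (intro tendsto_eventually) (auto simp: eventually_at_top_linorder)
  then show ?thesis using tendsto_unique[OF _ tendsto_busemann[OF ray]] by auto
qed

lemma busemann_cong:
  assumes "geodesic_ray \<gamma>" "geodesic_ray \<delta>" "\<forall>t\<ge>0. \<gamma> t = \<delta> t"
  shows "busemann \<gamma> = busemann \<delta>"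
proof
  fix y
  have "\<forall>\<^sub>F t in at_top. busemann_approx \<gamma> y t = busemann_approx \<delta> y t"
    unfolding eventually_at_top_linorder busemann_approx_def
    by (intro exI[of _ 0]) (simp add: assms(3))
  then have "(busemann_approx \<delta> y \<longlongrightarrow> busemann \<gamma> y) at_top"
    using tendsto_cong tendsto_busemann[OF assms(1)] by blast
  then show "busemann \<gamma> y = busemann \<delta> y"
    using tendsto_unique[OF _ _ tendsto_busemann[OF assms(2)]] by auto
qed

lemma CAT0_busemann_convex:
  assumes cat: "CAT0 TYPE('a::metric_space)" and ray: "geodesic_ray \<delta>"
    and c: "geodesic_segment c (x::'a) y" and u: "0 \<le> u" "u \<le> 1"
  shows "busemann \<delta> (c (u * dist x y)) \<le> (1 - u) * busemann \<delta> x + u * busemann \<delta> y"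
proof (rule tendsto_le[OF trivial_limit_at_top_linorder])
  show "((\<lambda>t. (1 - u) * busemann_approx \<delta> x t + u * busemann_approx \<delta> y t)
      \<longlongrightarrow> (1 - u) * busemann \<delta> x + u * busemann \<delta> y) at_top"
    by (intro tendsto_add tendsto_mult tendsto_const tendsto_busemann[OF ray])
  have "dist (c (u * dist x y)) (\<delta> t) \<le> (1 - u) * dist x (\<delta> t) + u * dist y (\<delta> t)" for t
    using CAT0_dist_geodesics_convex[OF cat c geodesic_segment_const u, of "\<delta> t"] by simp
  then show "\<forall>\<^sub>F t in at_top. busemann_approx \<delta> (c (u * dist x y)) t
      \<le> (1 - u) * busemann_approx \<delta> x t + u * busemann_approx \<delta> y t"
    unfolding busemann_approx_def by (simp add: algebra_simps)
qed (rule tendsto_busemann[OF ray])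

lemma hfun_ray:
  assumes "geodesic_ray \<gamma>" "0 \<le> t"
  shows "hfun (\<gamma> 0) (\<gamma> t) x = busemann_approx \<gamma> x t"
  using geodesic_ray_dist_start[OF assms] unfolding hfun_def busemann_approx_def by simp

lemma CAT0_busemann_horofunction:
  assumes cat: "CAT0 TYPE('a::metric_space)" and ray: "geodesic_ray (\<gamma> :: real \<Rightarrow> 'a)"
  shows "horofunction (\<gamma> 0) (busemann \<gamma>)"
  unfolding horofunction_def
proof (intro exI[of _ "\<lambda>n. \<gamma> (real n)"] allI impI)
  fix B :: "'a set" assume "bounded B"
  then obtain R where R: "0 \<le> R" "\<forall>x\<in>B. dist x (\<gamma> 0) \<le> R"
    by (metis bounded_any_center dist_commute order.trans zero_le_dist linear)
  show "uniform_limit B (\<lambda>n. hfun (\<gamma> 0) (\<gamma> (real n))) (busemann \<gamma>) sequentially"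
    unfolding uniform_limit_iff
  proof (intro allI impI)
    fix e :: real assume e: "e > 0"
    obtain N :: nat where N: "R + R\<^sup>2 / (2 * e) < real N" using reals_Archimedean2 by blast
    have "dist (hfun (\<gamma> 0) (\<gamma> (real n)) x) (busemann \<gamma> x) < e" if "N \<le> n" "x \<in> B" for n x
    proof -
      have n: "R + R\<^sup>2 / (2 * e) < real n" using N that(1) by linarith
      then have "R < real n" using e by (smt (verit) divide_nonneg_pos zero_le_power2)
      have "R\<^sup>2 / (2 * (real n - R)) < e"
        using n e \<open>R < real n\<close> by (simp add: field_simps)
      then show ?thesis
        using CAT0_busemann_approx_le[OF cat ray _ \<open>R < real n\<close>, of x] R that(2)
          busemann_le_approx[OF ray, of "real n" x]
        by (simp add: hfun_ray[OF ray] dist_real_def)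
    qed
    then show "\<forall>\<^sub>F n in sequentially. \<forall>x\<in>B. dist (hfun (\<gamma> 0) (\<gamma> (real n)) x) (busemann \<gamma> x) < e"
      unfolding eventually_sequentially by blast
  qed
qed

lemma tendsto_pointwiseI:
  fixes f :: "'b \<Rightarrow> 'a \<Rightarrow> 'c::topological_space"
  assumes "\<And>x. ((\<lambda>n. f n x) \<longlongrightarrow> l x) F"
  shows "(f \<longlongrightarrow> l) F"
  using assms limitin_componentwise[of "\<lambda>_. euclidean" UNIV f l F]
  by (simp add: euclidean_product_topology)

lemma busemann_metric_functional:
  assumes ray: "geodesic_ray \<gamma>"
  shows "metric_functional (\<gamma> 0) (busemann \<gamma>)"
  unfolding metric_functional_def
proof
  show "\<forall>x y. \<bar>busemann \<gamma> x - busemann \<gamma> y\<bar> \<le> dist x y"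
    using busemann_lipschitz[OF ray] by blast
  have "(\<lambda>n. hfun (\<gamma> 0) (\<gamma> (real n))) \<longlonglongrightarrow> busemann \<gamma>"
    by (intro tendsto_pointwiseI) (simp add: hfun_ray[OF ray] LIMSEQ_busemann[OF ray])
  then show "busemann \<gamma> \<in> closure (range (hfun (\<gamma> 0)))"
    by (intro Lim_in_closed_set[OF closed_closure _ sequentially_bot] always_eventually)
      (auto intro: closure_subset[THEN subsetD])
qed

lemma functional_action_eq_self:
  assumes "bij g" "\<And>x. h (g x) = h x - c" "h x0 = 0"
  shows "functional_action x0 g h = h"
proof
  fix x
  have "h (inv g z) = h z + c" for z
    using assms(2)[of "inv g z"] by (simp add: surj_f_inv_f[OF bij_is_surj[OF assms(1)]])
  then show "functional_action x0 g h x = h x"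
    unfolding functional_action_def using assms(3) by simp
qed

lemma horofunction_LIMSEQ:
  assumes "horofunction x0 h"
  obtains y where "\<And>x. (\<lambda>n. hfun x0 (y n) x) \<longlonglongrightarrow> h x"
    and "\<And>B. bounded B \<Longrightarrow> uniform_limit B (\<lambda>n. hfun x0 (y n)) h sequentially"
proof -
  obtain y where U: "\<And>B. bounded B \<Longrightarrow> uniform_limit B (\<lambda>n. hfun x0 (y n)) h sequentially"
    using assms unfolding horofunction_def by blast
  moreover have "(\<lambda>n. hfun x0 (y n) x) \<longlonglongrightarrow> h x" for x
    by (rule tendsto_uniform_limitI[OF U[of "{x}"]]) auto
  ultimately show ?thesis using that by blast
qed

lemma horofunction_base:
  assumes "horofunction x0 h"
  shows "h x0 = 0"
proof -
  obtain y where "(\<lambda>n. hfun x0 (y n) x0) \<longlonglongrightarrow> h x0"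
    using horofunction_LIMSEQ[OF assms] by metis
  then show ?thesis unfolding hfun_def by (simp add: LIMSEQ_const_iff)
qed

lemma eventually_le_mult_real_of_nat:
  fixes a c :: real
  assumes "0 < c"
  shows "\<forall>\<^sub>F k in sequentially. a \<le> c * real k"
  using filterlim_real_sequentially[unfolded filterlim_at_top, rule_format, of "a / c"]
  by eventually_elim (use assms in \<open>simp add: pos_divide_le_eq mult.commute\<close>)

lemma LIMSEQ_divide_imp_eventually_le:
  fixes f :: "nat \<Rightarrow> real"
  assumes "(\<lambda>k. f k / real k) \<longlonglongrightarrow> 0" "0 < c"
  shows "\<forall>\<^sub>F k in sequentially. f k \<le> c * real k"
  using order_tendstoD(2)[OF assms] eventually_gt_at_top[of 0]
  by eventually_elim (simp add: divide_less_eq)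

lemma convex_sublinear_le_start:
  fixes f :: "real \<Rightarrow> real"
  assumes conv: "\<And>u t. 0 \<le> u \<Longrightarrow> u \<le> 1 \<Longrightarrow> 0 \<le> t \<Longrightarrow> f (u * t) \<le> (1 - u) * f 0 + u * f t"
    and sublinear: "\<And>c M. 0 < c \<Longrightarrow> \<exists>T\<ge>M. f T \<le> c * T"
    and t: "0 \<le> t"
  shows "f t \<le> f 0"
proof (rule ccontr)
  assume "\<not> f t \<le> f 0"
  then have "0 < t" using t by (cases "t = 0") auto
  define c where "c = (f t - f 0) / t"
  have c: "0 < c" unfolding c_def using \<open>0 < t\<close> \<open>\<not> f t \<le> f 0\<close> by simp
  have grows: "f 0 + c * T \<le> f T" if "t \<le> T" for T
  proof -
    have "f ((t / T) * T) \<le> (1 - t / T) * f 0 + (t / T) * f T"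
      using conv[of "t / T" T] that \<open>0 < t\<close> by simp
    then have "T * f t \<le> (T - t) * f 0 + t * f T"
      using that \<open>0 < t\<close> by (simp add: field_simps)
    then show ?thesis
      using \<open>0 < t\<close> unfolding c_def by (simp add: field_simps)
  qed
  obtain T where T: "max t (2 * \<bar>f 0\<bar> / c + 1) \<le> T" "f T \<le> c / 2 * T"
    using sublinear[of "c / 2" "max t (2 * \<bar>f 0\<bar> / c + 1)"] c by auto
  then have "c / 2 * T \<le> \<bar>f 0\<bar>"
    using grows[of T] by (simp add: algebra_simps abs_if split: if_splits)
  moreover have "\<bar>f 0\<bar> < c / 2 * T"
    using T(1) c by (simp add: field_simps)
  ultimately show False by linarith
qed

lemma square_diff_le_mult:
  fixes E a b p q :: real
  assumes "E - b + a \<le> p" "0 \<le> E + b - a" "E + b - a \<le> q" "0 \<le> p"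
  shows "E\<^sup>2 - (a - b)\<^sup>2 \<le> p * q"
proof -
  have "E\<^sup>2 - (a - b)\<^sup>2 = (E - b + a) * (E + b - a)" by (simp add: power2_eq_square algebra_simps)
  also have "\<dots> \<le> p * q"
  proof (cases "0 \<le> E - b + a")
    case True
    then show ?thesis using assms by (intro mult_mono) auto
  next
    case False
    then show ?thesis
      using assms by (smt (verit) mult_nonneg_nonneg mult_nonpos_nonneg)
  qed
  finally show ?thesis .
qed

section \<open>Limits of geodesic segments\<close>

lemma CAT0_dist_segment_ray_sq:
  assumes cat: "CAT0 TYPE('a::metric_space)" and ray: "geodesic_ray (\<gamma> :: real \<Rightarrow> 'a)"
    and \<sigma>: "geodesic_segment \<sigma> (\<gamma> 0) y" and C: "dist y (\<gamma> m) \<le> C" and s: "0 \<le> s" "s + C < m"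
  shows "(dist (\<sigma> s) (\<gamma> s))\<^sup>2 \<le> s\<^sup>2 * C\<^sup>2 / ((m - C) * m)"
proof -
  define D E where "D = dist (\<gamma> 0) y" and "E = dist y (\<gamma> m)"
  have "0 \<le> C" using C by (meson order.trans zero_le_dist)
  then have m: "dist (\<gamma> 0) (\<gamma> m) = m" "0 < m - C"
    using geodesic_ray_dist_start[OF ray, of m] s by auto
  have D: "m - C \<le> D"
    using dist_triangle[of "\<gamma> 0" "\<gamma> m" y] C m unfolding D_def by (simp add: dist_commute)
  have "0 < D" "0 < m" "s \<le> D" "s \<le> m"
    using D m s \<open>0 \<le> C\<close> by linarith+
  then have "(dist (\<sigma> s) (\<gamma> s))\<^sup>2 \<le> s\<^sup>2 * (E\<^sup>2 - (D - m)\<^sup>2) / (D * m)"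
    using CAT0_dist_geodesics_same_time[OF cat \<sigma> geodesic_ray_segment[OF ray, of m]] m s
    unfolding D_def E_def by simp
  also have "\<dots> \<le> s\<^sup>2 * C\<^sup>2 / (D * m)"
  proof -
    have "E\<^sup>2 \<le> C\<^sup>2" using C unfolding E_def by (simp add: power_mono)
    then have "E\<^sup>2 - (D - m)\<^sup>2 \<le> C\<^sup>2" using zero_le_power2[of "D - m"] by linarith
    then show ?thesis
      using \<open>0 < D\<close> \<open>0 < m\<close> by (intro divide_right_mono mult_left_mono) auto
  qed
  also have "\<dots> \<le> s\<^sup>2 * C\<^sup>2 / ((m - C) * m)"
    using m D \<open>0 < D\<close> \<open>0 < m\<close> by (intro divide_left_mono mult_right_mono mult_pos_pos) auto
  finally show ?thesis .
qed

lemma CAT0_segments_tendsto_ray: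
  assumes cat: "CAT0 TYPE('a::metric_space)" and ray: "geodesic_ray (\<gamma> :: real \<Rightarrow> 'a)"
    and \<sigma>: "\<And>n. geodesic_segment (\<sigma> n) (\<gamma> 0) (y n)" and C: "\<And>n. dist (y n) (\<gamma> (real n)) \<le> C"
    and s: "0 \<le> s"
  shows "(\<lambda>n. \<sigma> n s) \<longlonglongrightarrow> \<gamma> s"
proof -
  obtain N :: nat where N: "s + C + 1 < real N" using reals_Archimedean2 by blast
  have "0 \<le> C" using C[of 0] by (meson order.trans zero_le_dist)
  have "(dist (\<sigma> n s) (\<gamma> s))\<^sup>2 \<le> s\<^sup>2 * C\<^sup>2 / real n" if "N \<le> n" for n
  proof -
    have n: "s + C + 1 < real n" using N that by linarith
    then have "real n * 1 \<le> real n * (real n - C)"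
      using s by (intro mult_left_mono) auto
    have "(dist (\<sigma> n s) (\<gamma> s))\<^sup>2 \<le> s\<^sup>2 * C\<^sup>2 / ((real n - C) * real n)"
      using CAT0_dist_segment_ray_sq[OF cat ray \<sigma>[of n] C[of n] s] n by simp
    also have "\<dots> \<le> s\<^sup>2 * C\<^sup>2 / real n"
    proof (rule divide_left_mono)
      show "real n \<le> (real n - C) * real n"
        using \<open>real n * 1 \<le> real n * (real n - C)\<close> by (simp add: mult.commute)
      show "0 < (real n - C) * real n * real n"
        using n \<open>0 \<le> C\<close> s by (intro mult_pos_pos) auto
    qed simp
    finally show ?thesis .
  qed
  then have "\<forall>\<^sub>F n in sequentially. norm ((dist (\<sigma> n s) (\<gamma> s))\<^sup>2) \<le> s\<^sup>2 * C\<^sup>2 / real n"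
    unfolding eventually_sequentially by auto
  then have "(\<lambda>n. (dist (\<sigma> n s) (\<gamma> s))\<^sup>2) \<longlonglongrightarrow> 0"
    by (rule Lim_null_comparison[OF _ lim_const_over_n])
  then have "(\<lambda>n. sqrt ((dist (\<sigma> n s) (\<gamma> s))\<^sup>2)) \<longlonglongrightarrow> sqrt 0"
    by (rule tendsto_real_sqrt)
  then have "(\<lambda>n. dist (\<sigma> n s) (\<gamma> s)) \<longlonglongrightarrow> 0"
    by simp
  then show ?thesis
    using tendsto_dist_iff by blast
qed

lemma segments_limit_geodesic_ray:
  assumes \<sigma>: "\<And>n. geodesic_segment (\<sigma> n) x0 (y n)"
    and far: "\<And>M. \<forall>\<^sub>F n in sequentially. M \<le> dist x0 (y n)"
    and lim: "\<And>s. 0 \<le> s \<Longrightarrow> (\<lambda>n. \<sigma> n s) \<longlonglongrightarrow> \<delta> s"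
  shows "geodesic_ray \<delta>" "\<delta> 0 = x0"
proof -
  show "geodesic_ray \<delta>"
    unfolding geodesic_ray_def
  proof (intro allI impI)
    fix s t :: real assume st: "0 \<le> s" "0 \<le> t"
    have "\<forall>\<^sub>F n in sequentially. dist (\<sigma> n s) (\<sigma> n t) = \<bar>s - t\<bar>"
      using far[of "max s t"] by eventually_elim (use geodesic_segment_dist[OF \<sigma>] st in simp)
    then have "(\<lambda>n. dist (\<sigma> n s) (\<sigma> n t)) \<longlonglongrightarrow> \<bar>s - t\<bar>"
      by (rule tendsto_eventually)
    then show "dist (\<delta> s) (\<delta> t) = \<bar>s - t\<bar>"
      using LIMSEQ_unique[OF tendsto_dist[OF lim[OF st(1)] lim[OF st(2)]]] by blast
  qed
  show "\<delta> 0 = x0"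
    using LIMSEQ_unique[OF lim[of 0]] geodesic_segment_start[OF \<sigma>] by simp
qed

lemma CAT0_hfun_busemann_approx_dist:
  assumes cat: "CAT0 TYPE('a::metric_space)" and \<sigma>: "geodesic_segment \<sigma> (x0::'a) y"
    and R: "dist x x0 \<le> R" "R < s" "s \<le> dist x0 y"
  shows "\<bar>hfun x0 y x - busemann_approx \<delta> x s\<bar> \<le> dist (\<sigma> s) (\<delta> s) + R\<^sup>2 / (2 * (s - R))"
proof -
  have "0 \<le> s" using R zero_le_dist[of x x0] by linarith
  have "hfun x0 y x \<le> dist x (\<sigma> s) - s"
    using dist_triangle[of x y "\<sigma> s"] geodesic_segment_dist_end[OF \<sigma> \<open>0 \<le> s\<close> R(3)]
    unfolding hfun_def by simp
  moreover have "dist x (\<sigma> s) - s \<le> hfun x0 y x + R\<^sup>2 / (2 * (s - R))"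
    using CAT0_dist_geodesic_excess[OF cat \<sigma> R] unfolding hfun_def by simp
  moreover have "\<bar>dist x (\<sigma> s) - dist x (\<delta> s)\<bar> \<le> dist (\<sigma> s) (\<delta> s)"
    by metric
  moreover have "0 \<le> R\<^sup>2 / (2 * (s - R))" using R by simp
  ultimately show ?thesis
    unfolding busemann_approx_def by (simp add: abs_le_iff)
qed

lemma CAT0_hfun_tendsto_busemann:
  assumes cat: "CAT0 TYPE('a::metric_space)" and ray: "geodesic_ray (\<delta> :: real \<Rightarrow> 'a)"
    and \<sigma>: "\<And>n. geodesic_segment (\<sigma> n) (\<delta> 0) (y n)"
    and far: "\<And>M. \<forall>\<^sub>F n in sequentially. M \<le> dist (\<delta> 0) (y n)"
    and lim: "\<And>s. 0 \<le> s \<Longrightarrow> (\<lambda>n. \<sigma> n s) \<longlonglongrightarrow> \<delta> s"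
  shows "(\<lambda>n. hfun (\<delta> 0) (y n) x) \<longlonglongrightarrow> busemann \<delta> x"
proof (rule tendstoI)
  fix e :: real assume e: "e > 0"
  define R where "R = dist x (\<delta> 0)"
  define s where "s = R + 2 * R\<^sup>2 / e + 1"
  have "0 \<le> 2 * R\<^sup>2 / e" using e by simp
  then have R: "0 \<le> R" "R < s" "0 \<le> s" unfolding R_def s_def by auto
  have err: "R\<^sup>2 / (2 * (s - R)) < e / 4"
    using e R unfolding s_def by (simp add: field_simps power2_eq_square)
  have "\<forall>\<^sub>F n in sequentially. dist (\<sigma> n s) (\<delta> s) < e / 2 \<and> s \<le> dist (\<delta> 0) (y n)"
    using tendstoD[OF lim[OF R(3)], of "e / 2"] far[of s] e by (auto intro: eventually_conj)
  then show "\<forall>\<^sub>F n in sequentially. dist (hfun (\<delta> 0) (y n) x) (busemann \<delta> x) < e"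
  proof eventually_elim
    case (elim n)
    have "dist x (\<delta> 0) \<le> R" unfolding R_def by simp
    then have "\<bar>hfun (\<delta> 0) (y n) x - busemann_approx \<delta> x s\<bar> < e / 2 + e / 4"
      using CAT0_hfun_busemann_approx_dist[OF cat \<sigma>[of n], of x R s \<delta>] elim R err by linarith
    moreover have "\<bar>busemann_approx \<delta> x s - busemann \<delta> x\<bar> < e / 4"
      using CAT0_busemann_approx_le[OF cat ray, of x R s] busemann_le_approx[OF ray R(3), of x]
        \<open>dist x (\<delta> 0) \<le> R\<close> R err by linarith
    ultimately show ?case unfolding dist_real_def by linarith
  qed
qed

lemma CAT0_hfun_tendsto_busemann_bounded:
  assumes cat: "CAT0 TYPE('a::metric_space)" and ray: "geodesic_ray (\<delta> :: real \<Rightarrow> 'a)"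
    and C: "\<And>n. dist (y n) (\<delta> (real n)) \<le> C"
  shows "(\<lambda>n. hfun (\<delta> 0) (y n) x) \<longlonglongrightarrow> busemann \<delta> x"
proof -
  define \<sigma> where "\<sigma> n = (SOME c. geodesic_segment c (\<delta> 0) (y n))" for n
  have \<sigma>: "geodesic_segment (\<sigma> n) (\<delta> 0) (y n)" for n
    unfolding \<sigma>_def using CAT0_geodesic_segment_exists[OF cat] by (metis someI_ex)
  have lower: "real n - C \<le> dist (\<delta> 0) (y n)" for n
    using dist_triangle[of "\<delta> 0" "\<delta> (real n)" "y n"] C[of n] geodesic_ray_dist_start[OF ray, of n]
    by (simp add: dist_commute)
  have far: "\<forall>\<^sub>F n in sequentially. M \<le> dist (\<delta> 0) (y n)" for M
    using eventually_le_mult_real_of_nat[OF zero_less_one, of "M + C"]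
  proof eventually_elim
    case (elim n)
    then show ?case using lower[of n] by simp
  qed
  show ?thesis
    by (rule CAT0_hfun_tendsto_busemann[OF cat ray \<sigma> far CAT0_segments_tendsto_ray[OF cat ray \<sigma> C]])
qed

lemma CAT0_asymptotic_rays_eq:
  assumes cat: "CAT0 TYPE('a::metric_space)"
    and rays: "geodesic_ray (\<gamma> :: real \<Rightarrow> 'a)" "geodesic_ray \<delta>" "\<gamma> 0 = \<delta> 0"
    and asym: "asymptotic \<gamma> \<delta>" and t: "0 \<le> t"
  shows "\<gamma> t = \<delta> t"
proof -
  obtain C where "\<forall>t\<ge>0. dist (\<gamma> t) (\<delta> t) \<le> C" using asym unfolding asymptotic_def by blast
  then have "(\<lambda>n. \<gamma> t) \<longlonglongrightarrow> \<delta> t"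
    using CAT0_segments_tendsto_ray[OF cat rays(2), of "\<lambda>_. \<gamma>" "\<lambda>n. \<gamma> (real n)" C t]
      geodesic_ray_segment[OF rays(1)] rays(3) t
    by simp
  then show ?thesis by (simp add: LIMSEQ_const_iff)
qed

text \<open>If b_\<delta>(\<gamma> s) = -s, then \<gamma> s is a point at distance s from \<delta> 0 which lies almost on the
  geodesics from \<delta> 0 to \<delta> t for large t, hence it is \<delta> s.\<close>
lemma CAT0_busemann_on_ray_eq:
  assumes cat: "CAT0 TYPE('a::metric_space)"
    and rays: "geodesic_ray (\<gamma> :: real \<Rightarrow> 'a)" "geodesic_ray \<delta>" "\<gamma> 0 = \<delta> 0"
    and b: "busemann \<delta> (\<gamma> s) = - s" and s: "0 \<le> s"
  shows "\<gamma> s = \<delta> s"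
proof -
  define e where "e t = busemann_approx \<delta> (\<gamma> s) t + s" for t
  have "(e \<longlongrightarrow> busemann \<delta> (\<gamma> s) + s) at_top"
    unfolding e_def by (intro tendsto_intros tendsto_busemann[OF rays(2)])
  then have "((\<lambda>t. (e t)\<^sup>2 + 2 * e t * s) \<longlongrightarrow> 0) at_top"
    using b by (auto intro!: tendsto_eq_intros)
  moreover have "\<forall>\<^sub>F t in at_top. (dist (\<gamma> s) (\<delta> s))\<^sup>2 \<le> (e t)\<^sup>2 + 2 * e t * s"
    unfolding eventually_at_top_linorder
  proof (intro exI[of _ "s + 1"] allI impI)
    fix t assume "s + 1 \<le> t"
    then have t: "0 < t" "s \<le> t" "dist (\<delta> 0) (\<delta> t) = t" "dist (\<delta> 0) (\<gamma> s) = s"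
      using s geodesic_ray_dist_start[OF rays(2), of t] geodesic_ray_dist_start[OF rays(1), of s] rays(3)
      by auto
    have "0 \<le> e t"
      using dist_triangle[of "\<delta> 0" "\<delta> t" "\<gamma> s"] t unfolding e_def busemann_approx_def by simp
    have "(dist (\<gamma> s) (\<delta> s))\<^sup>2 \<le> s * (e t)\<^sup>2 / t + 2 * e t * s"
      using CAT0_near_geodesic[OF cat geodesic_ray_segment[OF rays(2) less_imp_le[OF t(1)]]
          s, of "\<gamma> s" "e t"] t \<open>0 \<le> e t\<close>
      unfolding e_def busemann_approx_def by simp
    also have "s * (e t)\<^sup>2 / t \<le> (e t)\<^sup>2"
      using t mult_right_mono[OF t(2) zero_le_power2[of "e t"]] by (simp add: divide_le_eq mult.commute)
    finally show "(dist (\<gamma> s) (\<delta> s))\<^sup>2 \<le> (e t)\<^sup>2 + 2 * e t * s" by simp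
  qed
  ultimately have "(dist (\<gamma> s) (\<delta> s))\<^sup>2 \<le> 0"
    by (rule tendsto_lowerbound) simp
  then show ?thesis by simp
qed

lemma isometry_dist: "isometry g \<Longrightarrow> dist (g a) (g b) = dist a b"
  unfolding isometry_def by auto

lemma isometry_inv_apply: "isometry g \<Longrightarrow> g (inv g x) = x"
  unfolding isometry_def by (meson bij_inv_eq_iff)

lemma isometry_apply_inv: "isometry g \<Longrightarrow> inv g (g x) = x"
  unfolding isometry_def by (simp add: bij_is_inj)

lemma isometry_inv_dist: "isometry g \<Longrightarrow> dist (inv g a) (inv g b) = dist a b"
  using isometry_dist[of g "inv g a" "inv g b"] by (simp add: isometry_inv_apply)

lemma boundary_action_asymptotic_class:
  assumes g: "isometry g" and asym: "asymptotic (g \<circ> \<gamma>) \<gamma>"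
  shows "boundary_action g {\<delta>. geodesic_ray \<delta> \<and> asymptotic \<delta> \<gamma>} = {\<delta>. geodesic_ray \<delta> \<and> asymptotic \<delta> \<gamma>}"
  unfolding boundary_action_def
proof safe
  fix \<delta> assume "geodesic_ray \<delta>" "asymptotic \<delta> \<gamma>"
  then show "geodesic_ray (g \<circ> \<delta>)" "asymptotic (g \<circ> \<delta>) \<gamma>"
    using geodesic_ray_comp_isometric asymptotic_trans[OF asymptotic_comp_isometric asym]
      isometry_dist[OF g] by blast+
  have "asymptotic (inv g \<circ> \<delta>) (inv g \<circ> (g \<circ> \<gamma>))"
    using asymptotic_comp_isometric[OF asymptotic_trans[OF \<open>asymptotic \<delta> \<gamma>\<close> asymptotic_sym[OF asym]]]
      isometry_inv_dist[OF g] by blast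
  moreover have "inv g \<circ> (g \<circ> \<gamma>) = \<gamma>" by (auto simp: isometry_apply_inv[OF g])
  ultimately have "inv g \<circ> \<delta> \<in> {\<delta>. geodesic_ray \<delta> \<and> asymptotic \<delta> \<gamma>}"
    using geodesic_ray_comp_isometric[OF \<open>geodesic_ray \<delta>\<close> isometry_inv_dist[OF g]] by simp
  moreover have "\<delta> = g \<circ> (inv g \<circ> \<delta>)" by (auto simp: isometry_inv_apply[OF g])
  ultimately show "\<delta> \<in> (\<circ>) g ` {\<delta>. geodesic_ray \<delta> \<and> asymptotic \<delta> \<gamma>}" by blast
qed

text \<open>If g moves the points of a ray \<gamma> a bounded amount, then b(gx) - b(x) does not depend
  on x: both terms are limits along the sequence inv g (\<gamma> n), which stays within bounded distance
  of \<gamma>.\<close>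
lemma CAT0_busemann_isometry_shift:
  assumes cat: "CAT0 TYPE('a::metric_space)" and ray: "geodesic_ray (\<gamma> :: real \<Rightarrow> 'a)"
    and g: "isometry g" and C: "\<And>t. 0 \<le> t \<Longrightarrow> dist (g (\<gamma> t)) (\<gamma> t) \<le> C"
  shows "busemann \<gamma> (g x) = busemann \<gamma> x + busemann \<gamma> (g (\<gamma> 0))"
proof -
  define y where "y n = inv g (\<gamma> (real n))" for n
  have "dist (y n) (\<gamma> (real n)) \<le> C" for n
    using C[of n] isometry_inv_dist[OF g, of "\<gamma> (real n)" "g (\<gamma> (real n))"]
    unfolding y_def by (simp add: isometry_apply_inv[OF g] dist_commute)
  note hfun_lim = CAT0_hfun_tendsto_busemann_bounded[OF cat ray this]
  have shift: "(\<lambda>n. dist (\<gamma> 0) (y n) - real n) \<longlonglongrightarrow> busemann \<gamma> (g z) - busemann \<gamma> z" for z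
  proof -
    have "dist z (y n) = dist (g z) (\<gamma> (real n))" for n
      using isometry_inv_dist[OF g, of "g z" "\<gamma> (real n)"] unfolding y_def
      by (simp add: isometry_apply_inv[OF g])
    then show ?thesis
      using tendsto_diff[OF LIMSEQ_busemann[OF ray, of "g z"] hfun_lim[of z]]
      unfolding busemann_approx_def hfun_def by simp
  qed
  have "busemann \<gamma> (\<gamma> 0) = 0" using busemann_on_ray[OF ray, of 0] by simp
  then show ?thesis using LIMSEQ_unique[OF shift[of x] shift[of "\<gamma> 0"]] by simp
qed

lemma hfun_LIMSEQ_far:
  assumes lim: "\<And>x. (\<lambda>n. hfun x0 (y n) x) \<longlonglongrightarrow> h x" and unbounded: "\<not> bdd_below (range h)"
  shows "\<forall>\<^sub>F n in sequentially. M \<le> dist x0 (y n)"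
proof -
  obtain x where "h x < - M - 1"
    using unbounded unfolding bdd_below_def by (auto simp: not_le)
  then have "\<forall>\<^sub>F n in sequentially. hfun x0 (y n) x < - M"
    using order_tendstoD(2)[OF lim[of x]] by simp
  then show ?thesis
  proof eventually_elim
    case (elim n)
    then show ?case using zero_le_dist[of x "y n"] unfolding hfun_def by linarith
  qed
qed

lemma CAT0_segments_hfun_close:
  assumes cat: "CAT0 TYPE('a::metric_space)"
    and \<sigma>: "geodesic_segment \<sigma> (x0::'a) y" and \<sigma>': "geodesic_segment \<sigma>' x0 y'"
    and s: "0 \<le> s" "s \<le> dist x0 y" "s \<le> dist x0 y'" "1 \<le> dist x0 y'"
    and e: "0 \<le> e" "e \<le> 1" and close: "hfun x0 y' (\<sigma> s) \<le> hfun x0 y (\<sigma> s) + e"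
  shows "(dist (\<sigma> s) (\<sigma>' s))\<^sup>2 \<le> 3 * e * s"
proof -
  have "hfun x0 y (\<sigma> s) = - s"
    using geodesic_segment_dist_end[OF \<sigma> s(1,2)] unfolding hfun_def by simp
  then have "dist (\<sigma> s) y' \<le> dist x0 y' - s + e"
    using close unfolding hfun_def by simp
  then have "(dist (\<sigma> s) (\<sigma>' s))\<^sup>2 \<le> s * e\<^sup>2 / dist x0 y' + 2 * e * s"
    using CAT0_near_geodesic[OF cat \<sigma>' s(1,3) geodesic_segment_dist_start[OF \<sigma> s(1,2)]] e
    by simp
  also have "s * e\<^sup>2 / dist x0 y' \<le> s * e"
  proof -
    have "e\<^sup>2 \<le> e * dist x0 y'"
      using e s(4) by (simp add: power2_eq_square mult_left_mono)
    then show ?thesis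
      using s e by (simp add: divide_le_eq mult_left_mono mult.assoc)
  qed
  finally show ?thesis by (simp add: algebra_simps)
qed

lemma CAT0_horofunction_segments_Cauchy:
  assumes cat: "CAT0 TYPE('a::metric_space)"
    and \<sigma>: "\<And>n. geodesic_segment (\<sigma> n) (x0::'a) (y n)"
    and far: "\<And>M. \<forall>\<^sub>F n in sequentially. M \<le> dist x0 (y n)"
    and unif: "\<And>B. bounded B \<Longrightarrow> uniform_limit B (\<lambda>n. hfun x0 (y n)) h sequentially"
    and s: "0 \<le> s"
  shows "Cauchy (\<lambda>n. \<sigma> n s)"
proof (rule metric_CauchyI)
  fix e :: real assume "e > 0"
  define \<epsilon> where "\<epsilon> = min (1 / 2) (e\<^sup>2 / (6 * (s + 1)))"
  have \<epsilon>: "0 < \<epsilon>" "\<epsilon> \<le> 1 / 2" "6 * \<epsilon> * s < e\<^sup>2"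
    unfolding \<epsilon>_def using \<open>e > 0\<close> s
    by (auto simp: min_def field_simps intro: mult_left_mono)
  have "\<forall>\<^sub>F n in sequentially. (\<forall>p\<in>cball x0 s. dist (hfun x0 (y n) p) (h p) < \<epsilon>) \<and> s + 1 \<le> dist x0 (y n)"
    using unif[OF bounded_cball] \<epsilon>(1) far[of "s + 1"]
    unfolding uniform_limit_iff by (auto intro: eventually_conj)
  then obtain N where N: "\<And>n. N \<le> n \<Longrightarrow> (\<forall>p\<in>cball x0 s. \<bar>hfun x0 (y n) p - h p\<bar> < \<epsilon>)
      \<and> s + 1 \<le> dist x0 (y n)"
    unfolding eventually_sequentially dist_real_def by blast
  have "dist (\<sigma> m s) (\<sigma> n s) < e" if "N \<le> m" "N \<le> n" for m n
  proof -
    have "s \<le> dist x0 (y m)" using N[OF that(1)] by linarith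
    then have "\<sigma> m s \<in> cball x0 s"
      using geodesic_segment_dist_start[OF \<sigma> s] by simp
    then have "hfun x0 (y n) (\<sigma> m s) \<le> hfun x0 (y m) (\<sigma> m s) + 2 * \<epsilon>"
      using N[OF that(1)] N[OF that(2)] by (smt (verit) abs_le_iff)
    then have "(dist (\<sigma> m s) (\<sigma> n s))\<^sup>2 \<le> 3 * (2 * \<epsilon>) * s"
      using N[OF that(2)] \<epsilon> s
      by (intro CAT0_segments_hfun_close[OF cat \<sigma>[of m] \<sigma>[of n] s \<open>s \<le> dist x0 (y m)\<close>]) auto
    also have "\<dots> < e\<^sup>2" using \<epsilon> by simp
    finally show ?thesis
      using \<open>e > 0\<close> by (simp add: power2_less_imp_less)
  qed
  then show "\<exists>N. \<forall>m\<ge>N. \<forall>n\<ge>N. dist (\<sigma> m s) (\<sigma> n s) < e" by blast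
qed

text \<open>The geodesics from x0 towards the defining sequence converge to the ray.\<close>
lemma CAT0_horofunction_eq_busemann:
  fixes x0 :: "'a::complete_space"
  assumes cat: "CAT0 TYPE('a)" and horo: "horofunction x0 h" and unbounded: "\<not> bdd_below (range h)"
  obtains \<delta> where "geodesic_ray \<delta>" "\<delta> 0 = x0" "h = busemann \<delta>"
proof -
  obtain y where lim: "\<And>x. (\<lambda>n. hfun x0 (y n) x) \<longlonglongrightarrow> h x"
    and unif: "\<And>B. bounded B \<Longrightarrow> uniform_limit B (\<lambda>n. hfun x0 (y n)) h sequentially"
    using horofunction_LIMSEQ[OF horo] by metis
  note far = hfun_LIMSEQ_far[OF lim unbounded]
  define \<sigma> where "\<sigma> n = (SOME c. geodesic_segment c x0 (y n))" for n
  have \<sigma>: "geodesic_segment (\<sigma> n) x0 (y n)" for n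
    unfolding \<sigma>_def using CAT0_geodesic_segment_exists[OF cat] by (metis someI_ex)
  define \<delta> where "\<delta> s = lim (\<lambda>n. \<sigma> n s)" for s
  have \<delta>: "(\<lambda>n. \<sigma> n s) \<longlonglongrightarrow> \<delta> s" if "0 \<le> s" for s
    using Cauchy_convergent[OF CAT0_horofunction_segments_Cauchy[OF cat \<sigma> far unif that]]
    unfolding \<delta>_def by (simp add: convergent_LIMSEQ_iff)
  note ray = segments_limit_geodesic_ray[OF \<sigma> far \<delta>]
  have "h x = busemann \<delta> x" for x
    using CAT0_hfun_tendsto_busemann[OF cat ray(1), of \<sigma> y x] \<sigma> far \<delta>
    by (simp add: ray(2) LIMSEQ_unique[OF lim])
  then show ?thesis using that ray by blast
qed

section \<open>The ray followed by the orbit\<close>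

locale CAT0_translation =
  fixes x0 :: "'a::complete_space" and g :: "'a \<Rightarrow> 'a"
  assumes cat: "CAT0 TYPE('a)" and isometry: "isometry g"
    and translation_pos: "translation_length g > 0"
begin

abbreviation \<tau> :: real where "\<tau> \<equiv> translation_length g"

lemma g_dist: "dist (g a) (g b) = dist a b"
  using isometry by (rule isometry_dist)

definition orbit_dist :: "nat \<Rightarrow> real" where
  "orbit_dist n = dist x0 ((g ^^ n) x0)"

lemma orbit_dist_ge: "real n * \<tau> \<le> orbit_dist n"
  unfolding orbit_dist_def using CAT0_funpow_translation_length[OF cat g_dist] .

lemma orbit_dist_pos:
  assumes "1 \<le> n"
  shows "0 < orbit_dist n"
proof -
  have "0 < real n * \<tau>" using assms translation_pos by simp
  then show ?thesis using orbit_dist_ge[of n] by linarith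
qed

lemma dist_orbit:
  assumes "m \<le> n"
  shows "dist ((g ^^ m) x0) ((g ^^ n) x0) = orbit_dist (n - m)"
proof -
  have "(g ^^ n) x0 = (g ^^ m) ((g ^^ (n - m)) x0)"
    using assms by (metis funpow_add le_add_diff_inverse o_apply)
  then show ?thesis unfolding orbit_dist_def by (simp add: funpow_dist_isometric[OF g_dist])
qed

lemma orbit_dist_Suc: "\<bar>orbit_dist (Suc k) - orbit_dist k\<bar> \<le> orbit_dist 1"
  using dist_triangle[of x0 "(g ^^ Suc k) x0" "(g ^^ k) x0"]
    dist_triangle[of x0 "(g ^^ k) x0" "(g ^^ Suc k) x0"]
    dist_orbit[of k "Suc k"]
  unfolding orbit_dist_def by (simp add: abs_le_iff dist_commute)

text \<open>Compare with the orbit of a point y moved by at most \<tau> + e/2.\<close>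
lemma eventually_orbit_dist_le:
  assumes "0 < e"
  shows "\<forall>\<^sub>F k in sequentially. orbit_dist k \<le> (\<tau> + e) * real k"
proof -
  obtain y where y: "dist y (g y) < \<tau> + e / 2" using translation_length_less[of "e / 2" g] assms by auto
  have bound: "orbit_dist k \<le> 2 * dist x0 y + real k * (\<tau> + e / 2)" for k
  proof -
    have "orbit_dist k \<le> dist x0 y + dist y ((g ^^ k) y) + dist ((g ^^ k) y) ((g ^^ k) x0)"
      using dist_triangle[of x0 "(g ^^ k) x0" y] dist_triangle[of y "(g ^^ k) x0" "(g ^^ k) y"]
      unfolding orbit_dist_def by linarith
    moreover have "dist ((g ^^ k) y) ((g ^^ k) x0) = dist x0 y"
      using funpow_dist_isometric[OF g_dist] by (simp add: dist_commute)
    moreover have "dist y ((g ^^ k) y) \<le> real k * (\<tau> + e / 2)"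
      using funpow_dist_mult_le[OF g_dist, of y k 1] mult_left_mono[OF less_imp_le[OF y], of "real k"]
      by simp
    ultimately show ?thesis by simp
  qed
  have "\<forall>\<^sub>F k in sequentially. 2 * dist x0 y \<le> e / 2 * real k"
    using assms by (intro eventually_le_mult_real_of_nat) simp
  then show ?thesis
  proof eventually_elim
    case (elim k)
    then show ?case using bound[of k] by (simp add: algebra_simps)
  qed
qed

definition good_time :: "real \<Rightarrow> nat \<Rightarrow> bool" where
  "good_time e n \<longleftrightarrow> (\<forall>j<n. (\<tau> - e) * (real n - real j) \<le> orbit_dist n - orbit_dist j)"

lemma good_time_orbit_dist:
  assumes "good_time e n" "j \<le> n"
  shows "(\<tau> - e) * (real n - real j) \<le> orbit_dist n - orbit_dist j"
  using assms unfolding good_time_def by (cases "j = n") auto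

lemma good_time_mono:
  assumes "good_time e n" "e \<le> e'"
  shows "good_time e' n"
  unfolding good_time_def
proof (intro allI impI)
  fix j assume "j < n"
  then have "(\<tau> - e') * (real n - real j) \<le> (\<tau> - e) * (real n - real j)"
    using assms(2) by (intro mult_right_mono) auto
  moreover have "(\<tau> - e) * (real n - real j) \<le> orbit_dist n - orbit_dist j"
    using assms(1) \<open>j < n\<close> unfolding good_time_def by blast
  ultimately show "(\<tau> - e') * (real n - real j) \<le> orbit_dist n - orbit_dist j"
    by linarith
qed

text \<open>Since orbit_dist n - (\<tau> - e) n grows at least like e n, the first time it exceeds all its
  previous values up to M is e-good.\<close>
lemma frequently_good_time:
  assumes e: "0 < e"
  shows "\<exists>\<^sub>F n in sequentially. good_time e n"
  unfolding frequently_sequentially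
proof
  fix M
  define b where "b j = orbit_dist j - (\<tau> - e) * real j" for j
  define B where "B = Max (b ` {..M})"
  obtain n :: nat where "B / e < real n" using reals_Archimedean2 by blast
  moreover have "e * real n \<le> b n" using orbit_dist_ge[of n] unfolding b_def by (simp add: algebra_simps)
  ultimately have "B < b n" using e by (simp add: divide_less_eq mult.commute)
  define n0 where "n0 = (LEAST n. B < b n)"
  have n0: "B < b n0" "\<And>j. j < n0 \<Longrightarrow> b j \<le> B"
    unfolding n0_def using LeastI[of "\<lambda>n. B < b n", OF \<open>B < b n\<close>] not_less_Least by force+
  have "M \<le> n0"
  proof (rule ccontr)
    assume "\<not> M \<le> n0"
    then have "b n0 \<le> B" unfolding B_def by (intro Max_ge) auto
    then show False using n0(1) by simp
  qed
  moreover have "good_time e n0"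
    unfolding good_time_def
  proof (intro allI impI)
    fix j assume "j < n0"
    then have "b j < b n0" using n0 by force
    then show "(\<tau> - e) * (real n0 - real j) \<le> orbit_dist n0 - orbit_dist j"
      unfolding b_def by (simp add: algebra_simps)
  qed
  ultimately show "\<exists>n\<ge>M. good_time e n" by blast
qed

definition orbit_segment :: "nat \<Rightarrow> real \<Rightarrow> 'a" where
  "orbit_segment n = (SOME c. geodesic_segment c x0 ((g ^^ n) x0))"

lemma geodesic_segment_orbit_segment: "geodesic_segment (orbit_segment n) x0 ((g ^^ n) x0)"
  unfolding orbit_segment_def using CAT0_geodesic_segment_exists[OF cat] by (metis someI_ex)

text \<open>The comparison triangle for x0, g^k x0, g^n x0 is thin near x0: n is good, so the side
  from g^k x0 to g^n x0 is barely longer than the difference of the other two sides.\<close>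
lemma orbit_segments_close:
  assumes e: "0 < e" "e \<le> \<tau>" and k: "1 \<le> k" "k \<le> n" "orbit_dist k \<le> (\<tau> + e) * real k"
    and good: "good_time e n" and s: "0 \<le> s" "s \<le> orbit_dist k"
  shows "(dist (orbit_segment k s) (orbit_segment n s))\<^sup>2 \<le> 4 * e * s\<^sup>2 / \<tau>"
proof -
  define a b E where "a = orbit_dist k" and "b = orbit_dist n" and "E = orbit_dist (n - k)"
  have ab: "0 < a" "0 < b" using orbit_dist_pos k unfolding a_def b_def by auto
  have "0 \<le> (\<tau> - e) * (real n - real k)" using e k(2) by simp
  then have "a \<le> b"
    using good_time_orbit_dist[OF good k(2)] unfolding a_def b_def by linarith
  have E: "dist ((g ^^ k) x0) ((g ^^ n) x0) = E" using dist_orbit[OF k(2)] unfolding E_def .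
  have "E - b + a \<le> 2 * e * real k"
    using good_time_orbit_dist[OF good, of "n - k"] k(2,3) unfolding a_def b_def E_def
    by (simp add: of_nat_diff algebra_simps)
  moreover have "0 \<le> E + b - a" "E + b - a \<le> 2 * b"
    using dist_triangle[of x0 "(g ^^ k) x0" "(g ^^ n) x0"]
      dist_triangle[of "(g ^^ k) x0" "(g ^^ n) x0" x0] E
    unfolding a_def b_def orbit_dist_def by (simp_all add: dist_commute)
  ultimately have square: "E\<^sup>2 - (a - b)\<^sup>2 \<le> (2 * e * real k) * (2 * b)"
    using e by (intro square_diff_le_mult) auto
  have "(dist (orbit_segment k s) (orbit_segment n s))\<^sup>2 \<le> s\<^sup>2 * (E\<^sup>2 - (a - b)\<^sup>2) / (a * b)"
    using CAT0_dist_geodesics_same_time[OF cat geodesic_segment_orbit_segment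
        geodesic_segment_orbit_segment, of k n s] ab \<open>a \<le> b\<close> s E
    unfolding a_def b_def orbit_dist_def by simp
  also have "\<dots> \<le> s\<^sup>2 * ((2 * e * real k) * (2 * b)) / (a * b)"
    using square ab by (intro divide_right_mono mult_left_mono) auto
  also have "\<dots> = 4 * e * s\<^sup>2 * (real k / a)"
    using ab by (simp add: field_simps)
  also have "\<dots> \<le> 4 * e * s\<^sup>2 * (1 / \<tau>)"
    using orbit_dist_ge[of k] ab translation_pos e unfolding a_def
    by (intro mult_left_mono) (simp_all add: field_simps)
  finally show ?thesis by simp
qed

definition tolerance :: "nat \<Rightarrow> real" where
  "tolerance i = \<tau> / real (Suc i)"

lemma tolerance: "0 < tolerance i" "tolerance i \<le> \<tau>"
  unfolding tolerance_def using translation_pos by (simp_all add: divide_le_eq)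

lemma tolerance_antimono: "i \<le> j \<Longrightarrow> tolerance j \<le> tolerance i"
  unfolding tolerance_def using translation_pos by (intro divide_left_mono) auto

definition orbit_times :: "nat \<Rightarrow> nat" where
  "orbit_times = (SOME r. strict_mono r \<and> (\<forall>i. 1 \<le> r i \<and> good_time (tolerance i) (r i)
     \<and> orbit_dist (r i) \<le> (\<tau> + tolerance i) * real (r i)))"

lemma orbit_times_exist:
  "\<exists>r. strict_mono r \<and> (\<forall>i. 1 \<le> r i \<and> good_time (tolerance i) (r i)
     \<and> orbit_dist (r i) \<le> (\<tau> + tolerance i) * real (r i))"
proof -
  define P where "P i n \<longleftrightarrow> 1 \<le> n \<and> good_time (tolerance i) n \<and> orbit_dist n \<le> (\<tau> + tolerance i) * real n"
    for i n
  have "\<exists>n\<ge>M. P i n" for i M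
  proof -
    have "\<forall>\<^sub>F n in sequentially. orbit_dist n \<le> (\<tau> + tolerance i) * real n \<and> max 1 M \<le> n"
      using eventually_orbit_dist_le[OF tolerance(1)] eventually_ge_at_top by (rule eventually_conj)
    then have "\<exists>\<^sub>F n in sequentially. good_time (tolerance i) n
        \<and> orbit_dist n \<le> (\<tau> + tolerance i) * real n \<and> max 1 M \<le> n"
      by (rule frequently_eventually_frequently[OF frequently_good_time[OF tolerance(1)]])
    then show ?thesis unfolding frequently_sequentially P_def by auto
  qed
  then obtain r where "\<forall>i. P i (r i) \<and> r i < r (Suc i)"
    using dependent_nat_choice[of P "\<lambda>_ m n. m < n"] by (metis Suc_le_eq)
  then show ?thesis unfolding P_def by (intro exI[of _ r]) (auto intro: strict_monoI_Suc)
qed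

lemma orbit_times:
  "strict_mono orbit_times" "1 \<le> orbit_times i" "good_time (tolerance i) (orbit_times i)"
  "orbit_dist (orbit_times i) \<le> (\<tau> + tolerance i) * real (orbit_times i)"
  using someI_ex[OF orbit_times_exist] unfolding orbit_times_def[symmetric] by blast+

lemma orbit_times_mono: "i \<le> j \<Longrightarrow> orbit_times i \<le> orbit_times j"
  using orbit_times(1) by (simp add: strict_mono_less_eq)

lemma orbit_segment_close_orbit_times:
  assumes k: "1 \<le> k" "orbit_dist k \<le> (\<tau> + tolerance i) * real k" "k \<le> orbit_times j"
    and "i \<le> j" and s: "0 \<le> s" "s \<le> orbit_dist k"
  shows "dist (orbit_segment k s) (orbit_segment (orbit_times j) s) \<le> 2 * s / sqrt (real (Suc i))"
proof -
  have "good_time (tolerance i) (orbit_times j)"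
    using good_time_mono[OF orbit_times(3)] tolerance_antimono[OF \<open>i \<le> j\<close>] .
  then have "(dist (orbit_segment k s) (orbit_segment (orbit_times j) s))\<^sup>2 \<le> 4 * tolerance i * s\<^sup>2 / \<tau>"
    by (rule orbit_segments_close[OF tolerance k(1,3,2) _ s])
  also have "\<dots> = (2 * s / sqrt (real (Suc i)))\<^sup>2"
    unfolding tolerance_def using translation_pos
    by (simp add: power_divide power_mult_distrib del: of_nat_Suc)
  finally show ?thesis
    by (rule power2_le_imp_le) (use s in simp)
qed

lemma eventually_far_orbit_times: "\<forall>\<^sub>F j in sequentially. M \<le> orbit_dist (orbit_times j)"
  using eventually_le_mult_real_of_nat[OF translation_pos, of M]
proof eventually_elim
  case (elim j)
  have "\<tau> * real j \<le> \<tau> * real (orbit_times j)"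
    using strict_mono_imp_increasing[OF orbit_times(1), of j] translation_pos
    by (intro mult_left_mono) auto
  then show ?case using elim orbit_dist_ge[of "orbit_times j"] by (simp add: mult.commute)
qed

definition orbit_ray :: "real \<Rightarrow> 'a" where
  "orbit_ray s = lim (\<lambda>j. orbit_segment (orbit_times j) s)"

lemma LIMSEQ_orbit_ray:
  assumes s: "0 \<le> s"
  shows "(\<lambda>j. orbit_segment (orbit_times j) s) \<longlonglongrightarrow> orbit_ray s"
proof -
  have "Cauchy (\<lambda>j. orbit_segment (orbit_times j) s)"
  proof (rule metric_CauchyI)
    fix e :: real assume "0 < e"
    obtain I1 where I1: "\<And>j. I1 \<le> j \<Longrightarrow> s \<le> orbit_dist (orbit_times j)"
      using eventually_far_orbit_times[of s] unfolding eventually_sequentially by blast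
    obtain I2 :: nat where I2: "(4 * s / e)\<^sup>2 < real I2" using reals_Archimedean2 by blast
    define I where "I = max I1 I2"
    have "4 * s / e < sqrt (real (Suc I))"
      using I2 unfolding I_def by (intro real_less_rsqrt) simp
    then have small: "4 * s / sqrt (real (Suc I)) < e"
      using \<open>0 < e\<close> by (simp add: field_simps)
    have close: "dist (orbit_segment (orbit_times I) s) (orbit_segment (orbit_times j) s)
        \<le> 2 * s / sqrt (real (Suc I))" if "I \<le> j" for j
      using orbit_segment_close_orbit_times[OF orbit_times(2,4) orbit_times_mono[OF that] that s]
        I1[of I] unfolding I_def by simp
    have "dist (orbit_segment (orbit_times m) s) (orbit_segment (orbit_times n) s) < e"
      if "I \<le> m" "I \<le> n" for m n
      using close[OF that(1)] close[OF that(2)] small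
        dist_triangle3[of "orbit_segment (orbit_times m) s" "orbit_segment (orbit_times n) s"
          "orbit_segment (orbit_times I) s"]
      by simp
    then show "\<exists>N. \<forall>m\<ge>N. \<forall>n\<ge>N.
        dist (orbit_segment (orbit_times m) s) (orbit_segment (orbit_times n) s) < e"
      by blast
  qed
  then show ?thesis unfolding orbit_ray_def by (simp add: Cauchy_convergent_iff convergent_LIMSEQ_iff)
qed

lemma orbit_ray: "geodesic_ray orbit_ray" "orbit_ray 0 = x0"
  using segments_limit_geodesic_ray[of "\<lambda>j. orbit_segment (orbit_times j)" x0
      "\<lambda>j. (g ^^ orbit_times j) x0", OF geodesic_segment_orbit_segment _ LIMSEQ_orbit_ray]
    eventually_far_orbit_times
  unfolding orbit_dist_def by blast+

lemma dist_orbit_segment_orbit_ray: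
  assumes k: "1 \<le> k" "orbit_dist k \<le> (\<tau> + tolerance i) * real k" and s: "0 \<le> s" "s \<le> orbit_dist k"
  shows "dist (orbit_segment k s) (orbit_ray s) \<le> 2 * s / sqrt (real (Suc i))"
proof (rule tendsto_upperbound)
  show "(\<lambda>j. dist (orbit_segment k s) (orbit_segment (orbit_times j) s))
      \<longlonglongrightarrow> dist (orbit_segment k s) (orbit_ray s)"
    by (intro tendsto_dist tendsto_const LIMSEQ_orbit_ray s)
  have "k \<le> orbit_times j" if "k \<le> j" for j
    using that strict_mono_imp_increasing[OF orbit_times(1), of j] by linarith
  then show "\<forall>\<^sub>F j in sequentially. dist (orbit_segment k s) (orbit_segment (orbit_times j) s)
      \<le> 2 * s / sqrt (real (Suc i))"
    using orbit_segment_close_orbit_times[OF k _ _ s] unfolding eventually_sequentially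
    by (intro exI[of _ "max i k"]) simp
qed simp

lemma dist_orbit_orbit_ray:
  assumes "1 \<le> k" "orbit_dist k \<le> (\<tau> + tolerance i) * real k"
  shows "dist ((g ^^ k) x0) (orbit_ray (orbit_dist k)) \<le> 2 * orbit_dist k / sqrt (real (Suc i))"
  using dist_orbit_segment_orbit_ray[OF assms, of "orbit_dist k"]
    geodesic_segment_end[OF geodesic_segment_orbit_segment[of k]]
  unfolding orbit_dist_def by simp

lemma orbit_dist_asymp: "(\<lambda>n. orbit_dist n / real n) \<longlonglongrightarrow> \<tau>"
proof (rule tendstoI)
  fix e :: real assume "0 < e"
  have "\<forall>\<^sub>F n in sequentially. orbit_dist n \<le> (\<tau> + e / 2) * real n \<and> 1 \<le> n"
    using eventually_orbit_dist_le[of "e / 2"] \<open>0 < e\<close> eventually_ge_at_top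
    by (auto intro: eventually_conj)
  then show "\<forall>\<^sub>F n in sequentially. dist (orbit_dist n / real n) \<tau> < e"
  proof eventually_elim
    case (elim n)
    then have "\<tau> \<le> orbit_dist n / real n" "orbit_dist n / real n \<le> \<tau> + e / 2"
      using orbit_dist_ge[of n] by (simp_all add: field_simps)
    then show ?case using \<open>0 < e\<close> by (simp add: dist_real_def)
  qed
qed

lemma dist_orbit_orbit_ray_sublinear:
  "(\<lambda>k. dist ((g ^^ k) x0) (orbit_ray (orbit_dist k)) / real k) \<longlonglongrightarrow> 0"
proof (rule tendstoI)
  fix e :: real assume "0 < e"
  obtain i :: nat where "(2 * (\<tau> + 1) / e)\<^sup>2 < real i" using reals_Archimedean2 by blast
  then have "2 * (\<tau> + 1) / e < sqrt (real (Suc i))"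
    by (intro real_less_rsqrt) simp
  then have small: "2 * (\<tau> + 1) / sqrt (real (Suc i)) < e"
    using \<open>0 < e\<close> by (simp add: field_simps)
  have "\<forall>\<^sub>F k in sequentially. 1 \<le> k \<and> orbit_dist k \<le> (\<tau> + tolerance i) * real k
      \<and> orbit_dist k \<le> (\<tau> + 1) * real k"
    using eventually_ge_at_top[of 1] eventually_orbit_dist_le[OF tolerance(1), of i]
      eventually_orbit_dist_le[of 1]
    by (intro eventually_conj) simp_all
  then show "\<forall>\<^sub>F k in sequentially. dist (dist ((g ^^ k) x0) (orbit_ray (orbit_dist k)) / real k) 0 < e"
  proof eventually_elim
    case (elim k)
    then have "dist ((g ^^ k) x0) (orbit_ray (orbit_dist k)) \<le> 2 * orbit_dist k / sqrt (real (Suc i))"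
      using dist_orbit_orbit_ray[of k i] by simp
    also have "\<dots> \<le> 2 * ((\<tau> + 1) * real k) / sqrt (real (Suc i))"
      using elim by (intro divide_right_mono) auto
    also have "\<dots> = real k * (2 * (\<tau> + 1) / sqrt (real (Suc i)))" by simp
    also have "\<dots> < real k * e" using small elim by (intro mult_strict_left_mono) auto
    finally show ?case using elim by (simp add: divide_less_eq mult.commute)
  qed
qed

lemma orbit_ray_tracks: "(\<lambda>n. dist ((g ^^ n) x0) (orbit_ray (\<tau> * real n)) / real n) \<longlonglongrightarrow> 0"
proof (rule Lim_null_comparison)
  show "(\<lambda>n. dist ((g ^^ n) x0) (orbit_ray (orbit_dist n)) / real n + \<bar>orbit_dist n / real n - \<tau>\<bar>)
      \<longlonglongrightarrow> 0"
    using tendsto_add[OF dist_orbit_orbit_ray_sublinear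
        tendsto_rabs_zero[OF LIM_zero[OF orbit_dist_asymp]]]
    by simp
  have "dist ((g ^^ n) x0) (orbit_ray (\<tau> * real n)) / real n
      \<le> dist ((g ^^ n) x0) (orbit_ray (orbit_dist n)) / real n + \<bar>orbit_dist n / real n - \<tau>\<bar>"
    if "1 \<le> n" for n
  proof -
    have "dist (orbit_ray (orbit_dist n)) (orbit_ray (\<tau> * real n)) = \<bar>orbit_dist n - \<tau> * real n\<bar>"
      using geodesic_ray_dist[OF orbit_ray(1)] translation_pos by (simp add: orbit_dist_def)
    then have "dist ((g ^^ n) x0) (orbit_ray (\<tau> * real n))
        \<le> dist ((g ^^ n) x0) (orbit_ray (orbit_dist n)) + \<bar>orbit_dist n - \<tau> * real n\<bar>"
      using dist_triangle by metis
    also have "\<bar>orbit_dist n - \<tau> * real n\<bar> = real n * \<bar>orbit_dist n / real n - \<tau>\<bar>"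
      using that by (simp add: field_simps abs_mult[symmetric])
    finally show ?thesis using that by (simp add: field_simps)
  qed
  then show "\<forall>\<^sub>F n in sequentially. norm (dist ((g ^^ n) x0) (orbit_ray (\<tau> * real n)) / real n)
      \<le> dist ((g ^^ n) x0) (orbit_ray (orbit_dist n)) / real n + \<bar>orbit_dist n / real n - \<tau>\<bar>"
    unfolding eventually_sequentially by auto
qed

definition ray_displacement :: "real \<Rightarrow> real" where
  "ray_displacement t = dist (g (orbit_ray t)) (orbit_ray t)"

lemma ray_displacement_convex:
  assumes "0 \<le> u" "u \<le> 1" "0 \<le> t"
  shows "ray_displacement (u * t) \<le> (1 - u) * ray_displacement 0 + u * ray_displacement t"
proof -
  have seg: "geodesic_segment orbit_ray (orbit_ray 0) (orbit_ray t)"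
    using geodesic_ray_segment[OF orbit_ray(1) assms(3)] .
  show ?thesis
    using CAT0_dist_geodesics_convex[OF cat seg geodesic_segment_comp_isometric[OF seg g_dist]
        assms(1,2)]
      geodesic_ray_dist_start[OF orbit_ray(1) assms(3)]
    unfolding ray_displacement_def by (simp add: g_dist dist_commute)
qed

lemma ray_displacement_orbit_dist:
  "ray_displacement (orbit_dist k) \<le> dist ((g ^^ k) x0) (orbit_ray (orbit_dist k))
    + dist ((g ^^ Suc k) x0) (orbit_ray (orbit_dist (Suc k))) + orbit_dist 1"
proof -
  have "dist (orbit_ray (orbit_dist (Suc k))) (orbit_ray (orbit_dist k)) \<le> orbit_dist 1"
    using geodesic_ray_dist[OF orbit_ray(1)] orbit_dist_Suc[of k] by (simp add: orbit_dist_def)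
  moreover have "dist (g (orbit_ray (orbit_dist k))) ((g ^^ Suc k) x0)
      = dist ((g ^^ k) x0) (orbit_ray (orbit_dist k))"
    using g_dist by (simp add: dist_commute)
  ultimately show ?thesis
    unfolding ray_displacement_def
    by (smt (verit) dist_triangle)
qed

lemma ray_displacement_sublinear:
  assumes "0 < c"
  shows "\<exists>T\<ge>M. ray_displacement T \<le> c * T"
proof -
  define c' where "c' = c * \<tau> / 4"
  have "0 < c'" unfolding c'_def using assms translation_pos by simp
  note dev = LIMSEQ_divide_imp_eventually_le[OF dist_orbit_orbit_ray_sublinear \<open>0 < c'\<close>]
  have "\<forall>\<^sub>F k in sequentially.
      dist ((g ^^ Suc k) x0) (orbit_ray (orbit_dist (Suc k))) \<le> c' * real (Suc k)"
    using dev by (rule eventually_sequentially_Suc[THEN iffD2])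
  moreover have "\<forall>\<^sub>F k in sequentially. orbit_dist 1 \<le> c' * real k \<and> M \<le> \<tau> * real k \<and> 1 \<le> k"
    using eventually_le_mult_real_of_nat[OF \<open>0 < c'\<close>] eventually_le_mult_real_of_nat[OF translation_pos]
      eventually_ge_at_top
    by (intro eventually_conj) auto
  ultimately have "\<forall>\<^sub>F k in sequentially.
      M \<le> orbit_dist k \<and> ray_displacement (orbit_dist k) \<le> c * orbit_dist k"
    using dev
  proof eventually_elim
    case (elim k)
    then have "ray_displacement (orbit_dist k) \<le> c' * real k + c' * real (Suc k) + c' * real k"
      using ray_displacement_orbit_dist[of k] by linarith
    also have "\<dots> \<le> 4 * c' * real k"
      using mult_left_mono[of 1 "real k" c'] elim \<open>0 < c'\<close> by (simp add: distrib_left)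
    also have "\<dots> = c * (\<tau> * real k)"
      unfolding c'_def by simp
    also have "\<dots> \<le> c * orbit_dist k"
      using orbit_dist_ge[of k] assms by (simp add: mult.commute)
    finally show ?case using elim orbit_dist_ge[of k] by (simp add: mult.commute)
  qed
  then show ?thesis unfolding eventually_sequentially by blast
qed

lemma ray_displacement_le: "0 \<le> t \<Longrightarrow> ray_displacement t \<le> ray_displacement 0"
  by (rule convex_sublinear_le_start[OF ray_displacement_convex ray_displacement_sublinear])

lemma asymptotic_orbit_ray: "asymptotic (g \<circ> orbit_ray) orbit_ray"
  using ray_displacement_le unfolding asymptotic_def ray_displacement_def by auto

text \<open>h(g^n x0) = -c n, and the orbit stays within o(n) of orbit_ray(\<tau> n).\<close>
lemma lipschitz_shift_orbit_ray:
  assumes lip: "\<And>x y. \<bar>h x - h y\<bar> \<le> dist x y" and shift: "\<And>x. h (g x) = h x - c" and "h x0 = 0"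
  shows "(\<lambda>n. \<bar>h (orbit_ray (\<tau> * real n)) + c * real n\<bar> / real n) \<longlonglongrightarrow> 0"
proof (rule Lim_null_comparison[OF _ orbit_ray_tracks])
  have "\<bar>h (orbit_ray (\<tau> * real n)) + c * real n\<bar> \<le> dist ((g ^^ n) x0) (orbit_ray (\<tau> * real n))" for n
    using lip[of "orbit_ray (\<tau> * real n)" "(g ^^ n) x0"] funpow_shift[of h g c n x0, OF shift] \<open>h x0 = 0\<close>
    by (simp add: dist_commute algebra_simps)
  then show "\<forall>\<^sub>F n in sequentially. norm (\<bar>h (orbit_ray (\<tau> * real n)) + c * real n\<bar> / real n)
      \<le> dist ((g ^^ n) x0) (orbit_ray (\<tau> * real n)) / real n"
    by (intro always_eventually allI) (simp add: divide_right_mono)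
qed

lemma busemann_orbit_ray_shift: "busemann orbit_ray (g x) = busemann orbit_ray x - \<tau>"
proof -
  let ?b = "busemann orbit_ray"
  have shift: "?b (g x) = ?b x + ?b (g x0)" for x
    using CAT0_busemann_isometry_shift[OF cat orbit_ray(1) isometry
        ray_displacement_le[unfolded ray_displacement_def]]
    unfolding orbit_ray(2) .
  have b0: "?b x0 = 0" using busemann_on_ray[OF orbit_ray(1), of 0] orbit_ray(2) by simp
  have "?b (g x) = ?b x - (- ?b (g x0))" for x
    using shift[of x] by linarith
  then have lim: "(\<lambda>n. \<bar>?b (orbit_ray (\<tau> * real n)) + (- ?b (g x0)) * real n\<bar> / real n) \<longlonglongrightarrow> 0"
    using lipschitz_shift_orbit_ray[OF busemann_lipschitz[OF orbit_ray(1)] _ b0] by blast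
  have eq: "\<bar>?b (orbit_ray (\<tau> * real n)) + (- ?b (g x0)) * real n\<bar> / real n = \<bar>\<tau> + ?b (g x0)\<bar>"
    if "1 \<le> n" for n
  proof -
    have "?b (orbit_ray (\<tau> * real n)) + (- ?b (g x0)) * real n = - ((\<tau> + ?b (g x0)) * real n)"
      using busemann_on_ray[OF orbit_ray(1), of "\<tau> * real n"] translation_pos
      by (simp add: algebra_simps)
    then show ?thesis using that by (simp add: abs_mult)
  qed
  have "(\<lambda>n. \<bar>\<tau> + ?b (g x0)\<bar>) \<longlonglongrightarrow> 0"
    using eq by (intro Lim_transform_eventually[OF lim]) (auto simp: eventually_sequentially)
  then have "?b (g x0) = - \<tau>" by (simp add: LIMSEQ_const_iff)
  then show ?thesis using shift[of x] by linarith
qed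

text \<open>r \<mapsto> b_\<delta>(orbit_ray r) + r is convex, nonnegative (b_\<delta> is 1-Lipschitz) and zero at 0; the
  tracking estimate makes it sublinear.\<close>
lemma busemann_on_orbit_ray:
  assumes ray: "geodesic_ray \<delta>" "\<delta> 0 = x0"
    and shift: "\<And>x. busemann \<delta> (g x) = busemann \<delta> x - \<tau>" and s: "0 \<le> s"
  shows "busemann \<delta> (orbit_ray s) = - s"
proof -
  define \<phi> where "\<phi> r = busemann \<delta> (orbit_ray r) + r" for r
  have b0: "busemann \<delta> x0 = 0" using busemann_on_ray[OF ray(1), of 0] ray(2) by simp
  have "0 \<le> \<phi> s"
    using busemann_lipschitz[OF ray(1), of x0 "orbit_ray s"] b0 orbit_ray
      geodesic_ray_dist_start[OF orbit_ray(1) s]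
    unfolding \<phi>_def by (simp add: abs_le_iff)
  moreover have "\<phi> s \<le> \<phi> 0"
  proof (rule convex_sublinear_le_start[OF _ _ s])
    fix u t :: real assume ut: "0 \<le> u" "u \<le> 1" "0 \<le> t"
    show "\<phi> (u * t) \<le> (1 - u) * \<phi> 0 + u * \<phi> t"
      using CAT0_busemann_convex[OF cat ray(1) geodesic_ray_segment[OF orbit_ray(1) ut(3)] ut(1,2)]
        geodesic_ray_dist_start[OF orbit_ray(1) ut(3)]
      unfolding \<phi>_def by (simp add: algebra_simps)
  next
    fix c M :: real assume "0 < c"
    have "(\<lambda>n. \<bar>\<phi> (\<tau> * real n)\<bar> / real n) \<longlonglongrightarrow> 0"
      using lipschitz_shift_orbit_ray[OF busemann_lipschitz[OF ray(1)] shift b0]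
      unfolding \<phi>_def by (simp add: mult.commute)
    then have "\<forall>\<^sub>F n in sequentially. \<bar>\<phi> (\<tau> * real n)\<bar> \<le> c * \<tau> * real n \<and> M \<le> \<tau> * real n"
      using \<open>0 < c\<close> translation_pos
      by (intro eventually_conj LIMSEQ_divide_imp_eventually_le eventually_le_mult_real_of_nat) auto
    then obtain n where "\<bar>\<phi> (\<tau> * real n)\<bar> \<le> c * (\<tau> * real n)" "M \<le> \<tau> * real n"
      using eventually_sequentially by (auto simp: mult.assoc)
    then show "\<exists>T\<ge>M. \<phi> T \<le> c * T" by force
  qed
  moreover have "\<phi> 0 = 0" using b0 orbit_ray(2) unfolding \<phi>_def by simp
  ultimately show ?thesis unfolding \<phi>_def by simp
qed

lemma busemann_orbit_ray_unique:
  assumes horo: "horofunction x0 h" and shift: "\<And>x. h (g x) = h x - \<tau>"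
  shows "h = busemann orbit_ray"
proof -
  have orbit: "h ((g ^^ k) x0) = - (\<tau> * real k)" for k
    using funpow_shift[of h g \<tau> k x0, OF shift] horofunction_base[OF horo] by simp
  have "\<not> bdd_below (range h)"
  proof
    assume "bdd_below (range h)"
    then obtain m where m: "\<And>k. m \<le> - (\<tau> * real k)" using orbit unfolding bdd_below_def by (metis rangeI)
    obtain k :: nat where "(1 - m) / \<tau> \<le> real k" using real_arch_simple by blast
    then have "1 - m \<le> \<tau> * real k" using translation_pos by (simp add: pos_divide_le_eq mult.commute)
    then show False using m[of k] by linarith
  qed
  then obtain \<delta> where \<delta>: "geodesic_ray \<delta>" "\<delta> 0 = x0" "h = busemann \<delta>"
    by (rule CAT0_horofunction_eq_busemann[OF cat horo])
  have "\<forall>s\<ge>0. orbit_ray s = \<delta> s"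
    using CAT0_busemann_on_ray_eq[OF cat orbit_ray(1) \<delta>(1)] busemann_on_orbit_ray[OF \<delta>(1,2)] shift
      \<delta>(3) orbit_ray(2) \<delta>(2) by simp
  then show ?thesis using busemann_cong[OF orbit_ray(1) \<delta>(1)] \<delta>(3) by simp
qed

lemma functional_action_busemann_orbit_ray:
  "functional_action x0 g (busemann orbit_ray) = busemann orbit_ray"
  using isometry busemann_orbit_ray_shift busemann_on_ray[OF orbit_ray(1), of 0] orbit_ray(2)
  unfolding isometry_def by (intro functional_action_eq_self) auto

lemma asymptotic_orbit_ray_properties:
  assumes "geodesic_ray \<gamma>" "asymptotic \<gamma> orbit_ray" "\<gamma> 0 = x0"
  shows "metric_functional x0 (busemann \<gamma>) \<and>
    functional_action x0 g (busemann \<gamma>) = busemann \<gamma> \<and>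
    horofunction x0 (busemann \<gamma>) \<and>
    (\<forall>x. busemann \<gamma> (g x) = busemann \<gamma> x - \<tau>) \<and>
    (\<forall>h. horofunction x0 h \<and> (\<forall>x. h (g x) = h x - \<tau>) \<longrightarrow> h = busemann \<gamma>) \<and>
    (\<lambda>n. dist ((g ^^ n) x0) (\<gamma> (\<tau> * real n)) / real n) \<longlonglongrightarrow> 0"
proof -
  have same: "\<forall>t\<ge>0. \<gamma> t = orbit_ray t"
    using CAT0_asymptotic_rays_eq[OF cat assms(1) orbit_ray(1)] assms(2,3) orbit_ray(2) by simp
  then have track: "(\<lambda>n. dist ((g ^^ n) x0) (\<gamma> (\<tau> * real n)) / real n)
      = (\<lambda>n. dist ((g ^^ n) x0) (orbit_ray (\<tau> * real n)) / real n)"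
    using translation_pos by simp
  have busemann: "busemann \<gamma> = busemann orbit_ray"
    using busemann_cong[OF assms(1) orbit_ray(1) same] .
  show ?thesis
    unfolding track busemann
    using busemann_metric_functional[OF orbit_ray(1)] CAT0_busemann_horofunction[OF cat orbit_ray(1)]
      functional_action_busemann_orbit_ray busemann_orbit_ray_shift orbit_ray_tracks
    unfolding orbit_ray(2) by (intro conjI allI impI busemann_orbit_ray_unique) auto
qed

end

theorem theorem20:
  fixes x0 :: "'a::complete_space" and g :: "'a \<Rightarrow> 'a"
  assumes "CAT0 TYPE('a)"
    and "isometry g"
    and "translation_length g > 0"
  shows "\<exists>\<xi>\<in>visual_boundary TYPE('a). boundary_action g \<xi> = \<xi> \<and>
           (\<exists>\<gamma>\<in>\<xi>. \<gamma> 0 = x0) \<and>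
           (\<forall>\<gamma>\<in>\<xi>. \<gamma> 0 = x0 \<longrightarrow>
              metric_functional x0 (busemann \<gamma>) \<and>
              functional_action x0 g (busemann \<gamma>) = busemann \<gamma> \<and>
              horofunction x0 (busemann \<gamma>) \<and>
              (\<forall>x. busemann \<gamma> (g x) = busemann \<gamma> x - translation_length g) \<and>
              (\<forall>h. horofunction x0 h \<and> (\<forall>x. h (g x) = h x - translation_length g)
                   \<longrightarrow> h = busemann \<gamma>) \<and>
              (\<lambda>n. dist ((g ^^ n) x0) (\<gamma> (translation_length g * real n)) / real n)
                 \<longlonglongrightarrow> 0)"
proof -
  interpret CAT0_translation x0 g using assms by unfold_locales
  define \<xi> where "\<xi> = {\<delta>. geodesic_ray \<delta> \<and> asymptotic \<delta> orbit_ray}"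
  have "\<xi> \<in> visual_boundary TYPE('a)" "boundary_action g \<xi> = \<xi>" "orbit_ray \<in> \<xi>"
    unfolding \<xi>_def visual_boundary_def
    using orbit_ray(1) asymptotic_refl boundary_action_asymptotic_class[OF isometry asymptotic_orbit_ray]
    by auto
  then show ?thesis
    using orbit_ray(2) asymptotic_orbit_ray_properties unfolding \<xi>_def by blast
qed

end
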